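(* For integers $n \geq k \geq 2$ and $i \geq 2$, $$f_{(n,k,2),i}(q) = q^{k+i^2-3i+6} \frac{(1-q^{n-k+1})(1-q^{k-1})(1-q^n)}{(1-q^{i-1})(1-q)(1-q^2)} \begin{bmatrix} n+1 \\ i-2 \end{bmatrix}_q \begin{bmatrix} k \\ i-2 \end{bmatrix}_q.$$
   Context: For a partition $\lambda\vdash N$, a standard Young tableau of shape $\lambda$ is a filling of the Ferrers diagram (row $r$ has $\lambda_r$ left-justified boxes, rows top to bottom) with $1,\dots,N$, increasing along rows and down columns. It has a descent at $m$ if $m+1$ lies in a strictly lower row than $m$; $\mathrm{des}$ is the number of descents and $\mathrm{maj}$ their sum. $f_{\lambda,i}(q)=\sum q^{\mathrm{maj}(\tau)}$ over standard Young tableaux $\tau$ of shape $\lambda$ with $\mathrm{des}(\tau)=i$. The $q$-binomial coefficient is $\begin{bmatrix} M \\ N \end{bmatrix}_q = \frac{(q)_M}{(q)_N(q)_{M-N}}$ with $(q)_m=(1-q)\cdots(1-q^m)$ when $0\le N\le M$ are integers, and $0$ otherwise. *)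

theory Defs
  imports Complex_Main
begin

text \<open>Ferrers diagram of a partition given as a list of row lengths (row 0 on top).
  Cells are pairs (row, column), 0-indexed.\<close>
definition cells :: "nat list \<Rightarrow> (nat \<times> nat) set" where
  "cells lam = {(r, c). r < length lam \<and> c < lam ! r}"

definition SYT :: "nat list \<Rightarrow> (nat \<times> nat \<Rightarrow> nat) set" where
  "SYT lam = {T. bij_betw T (cells lam) {1..sum_list lam}
      \<and> (\<forall>x. x \<notin> cells lam \<longrightarrow> T x = 0)
      \<and> (\<forall>r c. (r, Suc c) \<in> cells lam \<longrightarrow> T (r, c) < T (r, Suc c))
      \<and> (\<forall>r c. (Suc r, c) \<in> cells lam \<longrightarrow> T (r, c) < T (Suc r, c))}"

definition row_of :: "nat list \<Rightarrow> (nat \<times> nat \<Rightarrow> nat) \<Rightarrow> nat \<Rightarrow> nat" where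
  "row_of lam T m = fst (the_inv_into (cells lam) T m)"

definition descents :: "nat list \<Rightarrow> (nat \<times> nat \<Rightarrow> nat) \<Rightarrow> nat set" where
  "descents lam T = {m. 1 \<le> m \<and> m < sum_list lam \<and> row_of lam T m < row_of lam T (Suc m)}"

definition des :: "nat list \<Rightarrow> (nat \<times> nat \<Rightarrow> nat) \<Rightarrow> nat" where
  "des lam T = card (descents lam T)"

definition maj :: "nat list \<Rightarrow> (nat \<times> nat \<Rightarrow> nat) \<Rightarrow> nat" where
  "maj lam T = \<Sum> (descents lam T)"

definition fpoly :: "nat list \<Rightarrow> nat \<Rightarrow> 'a::comm_ring_1 \<Rightarrow> 'a" where
  "fpoly lam i q = (\<Sum>T\<in>{T \<in> SYT lam. des lam T = i}. q ^ maj lam T)"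

definition qpoch :: "'a::comm_ring_1 \<Rightarrow> nat \<Rightarrow> 'a" where
  "qpoch q m = (\<Prod>j=1..m. 1 - q ^ j)"

definition qbinom :: "int \<Rightarrow> int \<Rightarrow> 'a::field \<Rightarrow> 'a" where
  "qbinom M N q = (if 0 \<le> N \<and> N \<le> M
     then qpoch q (nat M) / (qpoch q (nat N) * qpoch q (nat (M - N))) else 0)"

end

theory Submission
  imports Defs
begin

text \<open>
  Removing the largest entry \<open>N\<close> of a standard Young tableau leaves a standard tableau of the
  shape with that corner removed, and \<open>N - 1\<close> is a descent exactly when it lies in a row above
  the one of \<open>N\<close>. Sorting tableaux by the row of \<open>N\<close> therefore expresses \<open>f\<^bsub>\<lambda>,i\<^esub>\<close>
  through the \<open>f\<close> of the shapes \<open>\<lambda>\<close> minus one corner, at \<open>i\<close> and \<open>i - 1\<close>. For the shapes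
  \<open>(a, b, c)\<close> with \<open>c \<le> 2\<close> this yields recurrences in \<open>a + b\<close>; those for \<open>c = 2\<close> also involve
  \<open>c = 1\<close> and \<open>c = 0\<close>. Explicit rational functions of \<open>q\<close> satisfy the same recurrences, which
  comes down to identities of rational functions whose denominators \<open>1 - q\<^sup>m\<close> do not vanish since
  \<open>q\<close> is not a root of unity; induction on \<open>a + b\<close> then identifies \<open>f\<^bsub>(n,k,2),i\<^esub>\<close> with
  its closed form.
\<close>

section \<open>Removing the largest entry\<close>

lemma finite_cells [simp]: "finite (cells lam)"
proof -
  have "cells lam = (SIGMA r:{..<length lam}. {..<lam ! r})"
    by (auto simp: cells_def)
  thus ?thesis by simp
qed

lemma finite_SYT: "finite (SYT lam)"
proof -
  have "SYT lam \<subseteq> {T. \<forall>x. (x \<in> cells lam \<longrightarrow> T x \<in> {0..sum_list lam}) \<and> (x \<notin> cells lam \<longrightarrow> T x = 0)}"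
    by (auto simp: SYT_def bij_betw_def)
  thus ?thesis
    using finite_set_of_finite_funs[of "cells lam" "{0..sum_list lam}" 0] by (auto intro: finite_subset)
qed

lemma SYTD:
  assumes "T \<in> SYT lam"
  shows "inj_on T (cells lam)" "T ` cells lam = {1..sum_list lam}"
    "\<And>x. x \<notin> cells lam \<Longrightarrow> T x = 0"
    "\<And>r c. (r, Suc c) \<in> cells lam \<Longrightarrow> T (r, c) < T (r, Suc c)"
    "\<And>r c. (Suc r, c) \<in> cells lam \<Longrightarrow> T (r, c) < T (Suc r, c)"
  using assms by (auto simp: SYT_def bij_betw_def)

lemma SYT_le_size:
  assumes "T \<in> SYT lam" shows "T x \<le> sum_list lam"
proof (cases "x \<in> cells lam")
  case True
  thus ?thesis using SYTD(2)[OF assms] by (metis atLeastAtMost_iff image_eqI)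
qed (simp add: SYTD(3)[OF assms])

lemma SYT_max_entry_cell:
  assumes "T \<in> SYT lam" "1 \<le> sum_list lam"
  obtains x where "x \<in> cells lam" "T x = sum_list lam"
  using SYTD(2)[OF assms(1)] assms(2) by (metis atLeastAtMost_iff imageE order_refl)

definition is_corner :: "nat list \<Rightarrow> nat \<Rightarrow> bool" where
  "is_corner lam r \<longleftrightarrow> r < length lam \<and> 0 < lam ! r \<and> (Suc r < length lam \<longrightarrow> lam ! Suc r < lam ! r)"

definition remove_corner :: "nat list \<Rightarrow> nat \<Rightarrow> nat list" where
  "remove_corner lam r = lam[r := lam ! r - 1]"

abbreviation end_of_row :: "nat list \<Rightarrow> nat \<Rightarrow> nat \<times> nat" where
  "end_of_row lam r \<equiv> (r, lam ! r - 1)"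

lemma end_of_row_in_cells: "is_corner lam r \<Longrightarrow> end_of_row lam r \<in> cells lam"
  by (auto simp: is_corner_def cells_def)

lemma length_remove_corner [simp]: "length (remove_corner lam r) = length lam"
  by (simp add: remove_corner_def)

lemma sum_list_remove_corner:
  "is_corner lam r \<Longrightarrow> sum_list (remove_corner lam r) = sum_list lam - 1"
  unfolding remove_corner_def is_corner_def
  using sum_list_update[of r lam "lam ! r - 1"] elem_le_sum_list[of r lam] by simp

lemma cells_remove_corner:
  "is_corner lam r \<Longrightarrow> cells (remove_corner lam r) = cells lam - {end_of_row lam r}"
  unfolding remove_corner_def is_corner_def cells_def by (auto simp: nth_list_update split: if_splits)

lemma SYT_max_entry_at_corner:
  assumes T: "T \<in> SYT lam" and x: "(r, c) \<in> cells lam" and Tx: "T (r, c) = sum_list lam"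
  shows "is_corner lam r" "c = lam ! r - 1"
proof -
  have rc: "r < length lam" "c < lam ! r" using x by (auto simp: cells_def)
  have "\<not> Suc c < lam ! r"
  proof
    assume "Suc c < lam ! r"
    hence "T (r, c) < T (r, Suc c)" using SYTD(4)[OF T] rc by (auto simp: cells_def)
    thus False using SYT_le_size[OF T, of "(r, Suc c)"] Tx by simp
  qed
  thus "c = lam ! r - 1" using rc by simp
  have "lam ! Suc r < lam ! r" if "Suc r < length lam"
  proof (rule ccontr)
    assume "\<not> lam ! Suc r < lam ! r"
    hence "T (r, c) < T (Suc r, c)" using SYTD(5)[OF T] rc that by (auto simp: cells_def)
    thus False using SYT_le_size[OF T, of "(Suc r, c)"] Tx by simp
  qed
  thus "is_corner lam r" using rc by (auto simp: is_corner_def)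
qed

lemma SYT_remove_max:
  assumes r: "is_corner lam r" and T: "T \<in> SYT lam" and Tp: "T (end_of_row lam r) = sum_list lam"
  shows "T(end_of_row lam r := 0) \<in> SYT (remove_corner lam r)"
proof -
  let ?p = "end_of_row lam r" and ?N = "sum_list lam"
  have p: "?p \<in> cells lam" by (rule end_of_row_in_cells[OF r])
  have cells: "cells (remove_corner lam r) = cells lam - {?p}" by (rule cells_remove_corner[OF r])
  have N: "1 \<le> ?N" using SYTD(2)[OF T] p Tp by (metis atLeastAtMost_iff image_eqI)
  have "bij_betw T (cells lam - {?p}) ({1..?N} - {?N})"
    using T p Tp N by (intro bij_betw_DiffI) (auto simp: SYT_def bij_betw_def)
  moreover have "{1..?N} - {?N} = {1..sum_list (remove_corner lam r)}"
    using N sum_list_remove_corner[OF r] by auto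
  ultimately have "bij_betw T (cells (remove_corner lam r)) {1..sum_list (remove_corner lam r)}"
    unfolding cells by simp
  hence "bij_betw (T(?p := 0)) (cells (remove_corner lam r)) {1..sum_list (remove_corner lam r)}"
    by (rule iffD1[OF bij_betw_cong, rotated]) (auto simp: cells)
  thus ?thesis unfolding SYT_def
  proof (intro CollectI conjI allI impI)
    fix x assume "x \<notin> cells (remove_corner lam r)"
    thus "(T(?p := 0)) x = 0" using SYTD(3)[OF T, of x] cells by auto
  next
    fix r' c assume "(r', Suc c) \<in> cells (remove_corner lam r)"
    hence "(r', Suc c) \<in> cells lam" "(r', Suc c) \<noteq> ?p" using cells by auto
    moreover have "T (r', c) < T (r', Suc c)" using SYTD(4)[OF T] calculation(1) by blast
    ultimately show "(T(?p := 0)) (r', c) < (T(?p := 0)) (r', Suc c)" by auto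
  next
    fix r' c assume "(Suc r', c) \<in> cells (remove_corner lam r)"
    hence "(Suc r', c) \<in> cells lam" "(Suc r', c) \<noteq> ?p" using cells by auto
    moreover have "T (r', c) < T (Suc r', c)" using SYTD(5)[OF T] calculation(1) by blast
    ultimately show "(T(?p := 0)) (r', c) < (T(?p := 0)) (Suc r', c)" by auto
  qed
qed

lemma SYT_add_max:
  assumes r: "is_corner lam r" and T: "T \<in> SYT (remove_corner lam r)"
  shows "T(end_of_row lam r := sum_list lam) \<in> SYT lam"
proof -
  let ?p = "end_of_row lam r" and ?N = "sum_list lam"
  let ?T = "T(?p := ?N)"
  have p: "?p \<in> cells lam" by (rule end_of_row_in_cells[OF r])
  have cells: "cells (remove_corner lam r) = cells lam - {?p}" by (rule cells_remove_corner[OF r])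
  have size: "sum_list (remove_corner lam r) = ?N - 1" by (rule sum_list_remove_corner[OF r])
  have N: "1 \<le> ?N" using r elem_le_sum_list[of r lam] by (auto simp: is_corner_def)
  have "bij_betw ?T (cells lam - {?p}) {1..?N - 1}"
    using T unfolding SYT_def cells size by (subst bij_betw_cong[of _ ?T T]) auto
  moreover have "bij_betw ?T {?p} {?N}" by (simp add: bij_betw_def)
  ultimately have "bij_betw ?T ((cells lam - {?p}) \<union> {?p}) ({1..?N - 1} \<union> {?N})"
    by (rule bij_betw_combine) auto
  moreover have "(cells lam - {?p}) \<union> {?p} = cells lam" "{1..?N - 1} \<union> {?N} = {1..?N}"
    using p N by auto
  ultimately have bij: "bij_betw ?T (cells lam) {1..?N}" by simp
  have below_max: "T x < ?N" for x using SYT_le_size[OF T, of x] size N by simp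
  have Tp: "T ?p = 0" using SYTD(3)[OF T] cells by auto
  show ?thesis unfolding SYT_def
  proof (intro CollectI conjI allI impI bij)
    fix x assume "x \<notin> cells lam" thus "?T x = 0" using SYTD(3)[OF T, of x] cells p by auto
  next
    fix r' c assume "(r', Suc c) \<in> cells lam"
    moreover have "(r', c) \<noteq> ?p" using calculation r by (auto simp: cells_def)
    ultimately show "?T (r', c) < ?T (r', Suc c)"
      using below_max SYTD(4)[OF T, of r' c] cells by (cases "(r', Suc c) = ?p") auto
  next
    fix r' c assume "(Suc r', c) \<in> cells lam"
    moreover have "(r', c) \<noteq> ?p" using calculation r by (auto simp: cells_def is_corner_def)
    ultimately show "?T (r', c) < ?T (Suc r', c)"
      using below_max SYTD(5)[OF T, of r' c] cells by (cases "(Suc r', c) = ?p") auto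
  qed
qed

lemma row_of_eqI:
  assumes "T \<in> SYT lam" "x \<in> cells lam" "T x = m"
  shows "row_of lam T m = fst x"
  unfolding row_of_def using the_inv_into_f_eq[OF SYTD(1)[OF assms(1)] assms(3,2)] by simp

lemma row_of_less_length:
  assumes T: "T \<in> SYT lam" and m: "1 \<le> m" "m \<le> sum_list lam"
  shows "row_of lam T m < length lam"
proof -
  obtain x where "x \<in> cells lam" "T x = m" using SYTD(2)[OF T] m by (metis atLeastAtMost_iff imageE)
  thus ?thesis using row_of_eqI[OF T] by (auto simp: cells_def)
qed

lemma row_of_max:
  assumes "is_corner lam r" "T \<in> SYT lam" "T (end_of_row lam r) = sum_list lam"
  shows "row_of lam T (sum_list lam) = r"
  using row_of_eqI[OF assms(2) end_of_row_in_cells[OF assms(1)] assms(3)] by simp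

lemma row_of_max_is_corner:
  assumes T: "T \<in> SYT lam" and N: "1 \<le> sum_list lam"
  shows "is_corner lam (row_of lam T (sum_list lam))"
    "T (end_of_row lam (row_of lam T (sum_list lam))) = sum_list lam"
proof -
  obtain r c where x: "(r, c) \<in> cells lam" "T (r, c) = sum_list lam"
    using SYT_max_entry_cell[OF T N] by auto
  have "row_of lam T (sum_list lam) = r" using row_of_eqI[OF T x] by simp
  thus "is_corner lam (row_of lam T (sum_list lam))"
    "T (end_of_row lam (row_of lam T (sum_list lam))) = sum_list lam"
    using SYT_max_entry_at_corner[OF T x] x(2) by simp_all
qed

lemma row_of_remove_max:
  assumes r: "is_corner lam r" and T: "T \<in> SYT lam" and Tp: "T (end_of_row lam r) = sum_list lam"
    and m: "1 \<le> m" "m < sum_list lam"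
  shows "row_of (remove_corner lam r) (T(end_of_row lam r := 0)) m = row_of lam T m"
proof -
  let ?p = "end_of_row lam r"
  obtain x where x: "x \<in> cells lam" "T x = m" using SYTD(2)[OF T] m by (metis atLeastAtMost_iff imageE less_imp_le)
  have "x \<noteq> ?p" using x Tp m by auto
  hence "x \<in> cells (remove_corner lam r)" "(T(?p := 0)) x = m"
    using cells_remove_corner[OF r] x by auto
  thus ?thesis using row_of_eqI[OF SYT_remove_max[OF r T Tp]] row_of_eqI[OF T x] by simp
qed

lemma finite_descents [simp]: "finite (descents lam T)"
  by (rule finite_subset[of _ "{..<sum_list lam}"]) (auto simp: descents_def)

lemma descents_remove_max:
  assumes r: "is_corner lam r" and T: "T \<in> SYT lam" and Tp: "T (end_of_row lam r) = sum_list lam"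
  defines "T' \<equiv> T(end_of_row lam r := 0)"
  shows "descents lam T = descents (remove_corner lam r) T' \<union>
     (if 2 \<le> sum_list lam \<and> row_of (remove_corner lam r) T' (sum_list lam - 1) < r
      then {sum_list lam - 1} else {})"
proof -
  let ?N = "sum_list lam" and ?lam' = "remove_corner lam r"
  have size: "sum_list ?lam' = ?N - 1" by (rule sum_list_remove_corner[OF r])
  have rows: "\<And>m. 1 \<le> m \<Longrightarrow> m < ?N \<Longrightarrow> row_of ?lam' T' m = row_of lam T m"
    unfolding T'_def by (rule row_of_remove_max[OF r T Tp])
  have top: "row_of lam T ?N = r" by (rule row_of_max[OF r T Tp])
  show ?thesis
  proof (intro set_eqI iffI)
    fix m assume "m \<in> descents lam T"
    hence m: "1 \<le> m" "m < ?N" "row_of lam T m < row_of lam T (Suc m)" by (auto simp: descents_def)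
    show "m \<in> descents ?lam' T' \<union>
      (if 2 \<le> ?N \<and> row_of ?lam' T' (?N - 1) < r then {?N - 1} else {})"
    proof (cases "Suc m < ?N")
      case True
      thus ?thesis using m rows[of m] rows[of "Suc m"] size by (auto simp: descents_def)
    next
      case False
      hence "Suc m = ?N" "?N - 1 = m" "2 \<le> ?N" using m by simp_all
      thus ?thesis using m rows[of m] top by simp
    qed
  next
    fix m assume m: "m \<in> descents ?lam' T' \<union>
      (if 2 \<le> ?N \<and> row_of ?lam' T' (?N - 1) < r then {?N - 1} else {})"
    show "m \<in> descents lam T"
    proof (cases "m \<in> descents ?lam' T'")
      case True
      thus ?thesis using rows[of m] rows[of "Suc m"] size by (auto simp: descents_def)
    next
      case False
      hence "m = ?N - 1" "2 \<le> ?N" "row_of ?lam' T' (?N - 1) < r" using m by (auto split: if_splits)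
      thus ?thesis using rows[of m] top by (auto simp: descents_def)
    qed
  qed
qed

lemma des_maj_remove_max:
  assumes r: "is_corner lam r" and T: "T \<in> SYT lam" and Tp: "T (end_of_row lam r) = sum_list lam"
  defines "T' \<equiv> T(end_of_row lam r := 0)"
  defines "d \<equiv> 2 \<le> sum_list lam \<and> row_of (remove_corner lam r) T' (sum_list lam - 1) < r"
  shows "des lam T = des (remove_corner lam r) T' + (if d then 1 else 0)"
    "maj lam T = maj (remove_corner lam r) T' + (if d then sum_list lam - 1 else 0)"
proof -
  have split: "descents lam T = descents (remove_corner lam r) T' \<union> (if d then {sum_list lam - 1} else {})"
    unfolding d_def T'_def by (rule descents_remove_max[OF r T Tp])
  have "sum_list lam - 1 \<notin> descents (remove_corner lam r) T'"
    using sum_list_remove_corner[OF r] by (auto simp: descents_def)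
  thus "des lam T = des (remove_corner lam r) T' + (if d then 1 else 0)"
    "maj lam T = maj (remove_corner lam r) T' + (if d then sum_list lam - 1 else 0)"
    unfolding des_def maj_def split by auto
qed

definition fpoly_max_in_row :: "nat list \<Rightarrow> nat \<Rightarrow> nat \<Rightarrow> 'a::comm_ring_1 \<Rightarrow> 'a" where
  "fpoly_max_in_row lam r i q =
     (\<Sum>T\<in>{T \<in> SYT lam. des lam T = i \<and> row_of lam T (sum_list lam) = r}. q ^ maj lam T)"

lemma sum_fpoly_max_in_row:
  assumes R: "R \<subseteq> {..<length lam}"
  shows "(\<Sum>r\<in>R. fpoly_max_in_row lam r i q) =
    (\<Sum>T\<in>{T \<in> SYT lam. des lam T = i \<and> row_of lam T (sum_list lam) \<in> R}. q ^ maj lam T)"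
proof -
  let ?S = "{T \<in> SYT lam. des lam T = i \<and> row_of lam T (sum_list lam) \<in> R}"
  have "(\<Sum>r\<in>R. \<Sum>T\<in>{T \<in> ?S. row_of lam T (sum_list lam) = r}. q ^ maj lam T) = (\<Sum>T\<in>?S. q ^ maj lam T)"
    by (rule sum.group) (use finite_SYT finite_subset[OF R] in auto)
  moreover have "{T \<in> ?S. row_of lam T (sum_list lam) = r} =
      {T \<in> SYT lam. des lam T = i \<and> row_of lam T (sum_list lam) = r}" if "r \<in> R" for r
    using that by auto
  ultimately show ?thesis unfolding fpoly_max_in_row_def by simp
qed

lemma fpoly_eq_sum_max_in_row:
  assumes "1 \<le> sum_list lam"
  shows "fpoly lam i q = (\<Sum>r<length lam. fpoly_max_in_row lam r i q)"
  unfolding sum_fpoly_max_in_row[OF order_refl] fpoly_def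
  using row_of_less_length[OF _ assms order_refl] by (intro sum.cong) auto

lemma fpoly_max_in_row_not_corner:
  assumes "\<not> is_corner lam r" "1 \<le> sum_list lam"
  shows "fpoly_max_in_row lam r i q = 0"
proof -
  have "{T \<in> SYT lam. des lam T = i \<and> row_of lam T (sum_list lam) = r} = {}"
    using row_of_max_is_corner(1)[OF _ assms(2)] assms(1) by blast
  thus ?thesis unfolding fpoly_max_in_row_def by (simp only: sum.empty)
qed

lemma fpoly_max_in_row_remove_max:
  assumes r: "is_corner lam r"
  defines "d \<equiv> \<lambda>T'. 2 \<le> sum_list lam \<and> row_of (remove_corner lam r) T' (sum_list lam - 1) < r"
  shows "fpoly_max_in_row lam r i q =
    (\<Sum>T'\<in>{T' \<in> SYT (remove_corner lam r). des (remove_corner lam r) T' + (if d T' then 1 else 0) = i}.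
       q ^ (maj (remove_corner lam r) T' + (if d T' then sum_list lam - 1 else 0)))"
  unfolding fpoly_max_in_row_def
proof (rule sum.reindex_bij_witness[where i = "\<lambda>T'. T'(end_of_row lam r := sum_list lam)"
      and j = "\<lambda>T. T(end_of_row lam r := 0)"])
  let ?p = "end_of_row lam r" and ?lam' = "remove_corner lam r"
  have N: "1 \<le> sum_list lam" using r elem_le_sum_list[of r lam] by (auto simp: is_corner_def)
  fix T assume "T \<in> {T \<in> SYT lam. des lam T = i \<and> row_of lam T (sum_list lam) = r}"
  hence T: "T \<in> SYT lam" "des lam T = i" "row_of lam T (sum_list lam) = r" by auto
  have Tp: "T ?p = sum_list lam" using row_of_max_is_corner(2)[OF T(1) N] T(3) by simp
  show "(T(?p := 0))(?p := sum_list lam) = T" using Tp by auto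
  show "T(?p := 0) \<in> {T' \<in> SYT ?lam'. des ?lam' T' + (if d T' then 1 else 0) = i}"
    "q ^ (maj ?lam' (T(?p := 0)) + (if d (T(?p := 0)) then sum_list lam - 1 else 0)) = q ^ maj lam T"
    using SYT_remove_max[OF r T(1) Tp] des_maj_remove_max[OF r T(1) Tp] T(2) unfolding d_def by auto
next
  let ?p = "end_of_row lam r" and ?lam' = "remove_corner lam r"
  fix T' assume "T' \<in> {T' \<in> SYT ?lam'. des ?lam' T' + (if d T' then 1 else 0) = i}"
  hence T': "T' \<in> SYT ?lam'" "des ?lam' T' + (if d T' then 1 else 0) = i" by auto
  let ?T = "T'(?p := sum_list lam)"
  have T'p: "T' ?p = 0" using SYTD(3)[OF T'(1)] cells_remove_corner[OF r] by blast
  have T: "?T \<in> SYT lam" by (rule SYT_add_max[OF r T'(1)])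
  show restore: "?T(?p := 0) = T'" using T'p by auto
  have Tp: "?T ?p = sum_list lam" by simp
  have "des lam ?T = des ?lam' T' + (if d T' then 1 else 0)"
    unfolding d_def by (rule des_maj_remove_max(1)[OF r T Tp, unfolded restore])
  hence "des lam ?T = i" using T'(2) by simp
  thus "?T \<in> {T \<in> SYT lam. des lam T = i \<and> row_of lam T (sum_list lam) = r}"
    using T row_of_max[OF r T Tp] by blast
qed

text \<open>Split by the row \<open>r'\<close> of \<open>N - 1\<close>, where \<open>N\<close> is the largest entry: \<open>N - 1\<close> is a descent
  iff \<open>r' < r\<close>, and then it contributes the factor \<open>q ^ (N - 1)\<close>.\<close>

lemma fpoly_max_in_row_recurrence:
  assumes r: "is_corner lam r" and N: "2 \<le> sum_list lam"
  shows "fpoly_max_in_row lam r i q =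
      (\<Sum>r'\<in>{r..<length lam}. fpoly_max_in_row (remove_corner lam r) r' i q)
    + (if 1 \<le> i then q ^ (sum_list lam - 1) * (\<Sum>r'<r. fpoly_max_in_row (remove_corner lam r) r' (i - 1) q)
       else 0)"
proof -
  let ?lam' = "remove_corner lam r" and ?N = "sum_list lam"
  have size: "sum_list ?lam' = ?N - 1" by (rule sum_list_remove_corner[OF r])
  have "r < length lam" using r by (simp add: is_corner_def)
  have rows: "row_of ?lam' T' (?N - 1) < length lam" if "T' \<in> SYT ?lam'" for T'
    using row_of_less_length[OF that, of "?N - 1"] size N by simp
  define S1 where "S1 = {T' \<in> SYT ?lam'. des ?lam' T' = i \<and> row_of ?lam' T' (sum_list ?lam') \<in> {r..<length lam}}"
  define S2 where "S2 = {T' \<in> SYT ?lam'. des ?lam' T' + 1 = i \<and> row_of ?lam' T' (sum_list ?lam') \<in> {..<r}}"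
  have fin: "finite S1" "finite S2" unfolding S1_def S2_def using finite_SYT by auto
  have disj: "S1 \<inter> S2 = {}" unfolding S1_def S2_def by auto
  have "fpoly_max_in_row lam r i q = (\<Sum>T'\<in>S1 \<union> S2.
      q ^ (maj ?lam' T' + (if 2 \<le> ?N \<and> row_of ?lam' T' (?N - 1) < r then ?N - 1 else 0)))"
    unfolding fpoly_max_in_row_remove_max[OF r]
    by (rule sum.cong) (use rows in \<open>auto simp: S1_def S2_def size N split: if_splits\<close>)
  also have "\<dots> = (\<Sum>T'\<in>S1. q ^ maj ?lam' T') + q ^ (?N - 1) * (\<Sum>T'\<in>S2. q ^ maj ?lam' T')"
    unfolding sum.union_disjoint[OF fin disj] sum_distrib_left
    by (intro arg_cong2[where f="(+)"] sum.cong) (auto simp: S1_def S2_def size N power_add mult.commute)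
  also have "(\<Sum>T'\<in>S1. q ^ maj ?lam' T') = (\<Sum>r'\<in>{r..<length lam}. fpoly_max_in_row ?lam' r' i q)"
    unfolding S1_def by (rule sum_fpoly_max_in_row[symmetric]) auto
  also have "(\<Sum>T'\<in>S2. q ^ maj ?lam' T') =
      (if 1 \<le> i then (\<Sum>r'<r. fpoly_max_in_row ?lam' r' (i - 1) q) else 0)"
  proof (cases "1 \<le> i")
    case True
    hence "S2 = {T' \<in> SYT ?lam'. des ?lam' T' = i - 1 \<and> row_of ?lam' T' (sum_list ?lam') \<in> {..<r}}"
      unfolding S2_def by auto
    thus ?thesis using True sum_fpoly_max_in_row[of "{..<r}" ?lam' "i - 1" q] \<open>r < length lam\<close> by auto
  qed (auto simp: S2_def)
  finally show ?thesis by simp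
qed

section \<open>Three-row shapes\<close>

lemma is_corner_3:
  "is_corner [a, b, c] 0 \<longleftrightarrow> b < a" "is_corner [a, b, c] 1 \<longleftrightarrow> c < b" "is_corner [a, b, c] 2 \<longleftrightarrow> 0 < c"
  by (auto simp: is_corner_def numeral_2_eq_2)

lemma remove_corner_3:
  "remove_corner [a, b, c] 0 = [a - 1, b, c]" "remove_corner [a, b, c] 1 = [a, b - 1, c]"
  "remove_corner [a, b, c] 2 = [a, b, c - 1]"
  by (auto simp: remove_corner_def numeral_2_eq_2)

lemma fpoly_3_rows:
  "1 \<le> a + b + c \<Longrightarrow> fpoly [a, b, c] i q =
     fpoly_max_in_row [a, b, c] 0 i q + fpoly_max_in_row [a, b, c] 1 i q + fpoly_max_in_row [a, b, c] 2 i q"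
  using fpoly_eq_sum_max_in_row[of "[a, b, c]" i q] by (simp add: numeral_3_eq_3 numeral_2_eq_2 lessThan_Suc)

lemma fpoly_max_in_row0_3:
  assumes "1 \<le> a + b + c"
  shows "fpoly_max_in_row [a, b, c] 0 i q = (if b < a then fpoly [a - 1, b, c] i q else 0)"
proof (cases "b < a")
  case True
  hence r: "is_corner [a, b, c] 0" by (simp add: is_corner_3)
  show ?thesis using True unfolding fpoly_max_in_row_remove_max[OF r] remove_corner_3 fpoly_def by simp
qed (use fpoly_max_in_row_not_corner[of "[a, b, c]" 0] assms in \<open>simp add: is_corner_3\<close>)

lemma fpoly_max_in_row1_3:
  assumes "1 \<le> b" "b \<le> a"
  shows "fpoly_max_in_row [a, b, c] 1 i q = (if c < b then
      fpoly [a, b - 1, c] i q - fpoly [a - 1, b - 1, c] i q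
      + (if 1 \<le> i then q ^ (a + b + c - 1) * fpoly [a - 1, b - 1, c] (i - 1) q else 0) else 0)"
proof (cases "c < b")
  case True
  hence r: "is_corner [a, b, c] 1" using is_corner_3(2) by blast
  have "{1..<length [a, b, c]} = {1, 2}" "{..<1::nat} = {0}" by auto
  hence "fpoly_max_in_row [a, b, c] 1 i q =
      fpoly_max_in_row [a, b - 1, c] 1 i q + fpoly_max_in_row [a, b - 1, c] 2 i q
    + (if 1 \<le> i then q ^ (a + b + c - 1) * fpoly_max_in_row [a, b - 1, c] 0 (i - 1) q else 0)"
    using fpoly_max_in_row_recurrence[OF r, of i q] True assms
    unfolding remove_corner_3 by (simp add: add.assoc)
  moreover have "fpoly [a, b - 1, c] i q = fpoly_max_in_row [a, b - 1, c] 0 i q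
      + fpoly_max_in_row [a, b - 1, c] 1 i q + fpoly_max_in_row [a, b - 1, c] 2 i q"
    by (rule fpoly_3_rows) (use assms in simp)
  moreover have "fpoly_max_in_row [a, b - 1, c] 0 j q = fpoly [a - 1, b - 1, c] j q" for j
  proof -
    have "b - 1 < a" "1 \<le> a + (b - 1) + c" using assms by auto
    thus ?thesis using fpoly_max_in_row0_3[of a "b - 1" c j q] by simp
  qed
  ultimately show ?thesis using True by (simp add: algebra_simps)
next
  case False
  hence "\<not> is_corner [a, b, c] 1" using is_corner_3(2) by blast
  thus ?thesis using fpoly_max_in_row_not_corner[of "[a, b, c]" 1] assms False by simp
qed

lemma fpoly_max_in_row2_3:
  assumes "0 < c" "1 \<le> a + b"
  shows "fpoly_max_in_row [a, b, c] 2 i q = fpoly_max_in_row [a, b, c - 1] 2 i q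
    + (if 1 \<le> i then q ^ (a + b + c - 1) * (fpoly [a, b, c - 1] (i - 1) q - fpoly_max_in_row [a, b, c - 1] 2 (i - 1) q)
       else 0)"
proof -
  have r: "is_corner [a, b, c] 2" using assms is_corner_3(3) by blast
  have "{2..<length [a, b, c]} = {2}" "{..<2::nat} = {0, 1}" by auto
  moreover have "fpoly [a, b, c - 1] j q = fpoly_max_in_row [a, b, c - 1] 0 j q
      + fpoly_max_in_row [a, b, c - 1] 1 j q + fpoly_max_in_row [a, b, c - 1] 2 j q" for j
    by (rule fpoly_3_rows) (use assms in simp)
  ultimately show ?thesis
    using fpoly_max_in_row_recurrence[OF r, of i q] assms
    unfolding remove_corner_3 by (simp add: add.assoc)
qed

lemma fpoly_max_in_row2_ab0: "1 \<le> a + b \<Longrightarrow> fpoly_max_in_row [a, b, 0] 2 i q = 0"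
  by (rule fpoly_max_in_row_not_corner) (simp_all add: is_corner_3)

lemma fpoly_max_in_row2_ab1:
  "1 \<le> a + b \<Longrightarrow> fpoly_max_in_row [a, b, 1] 2 i q = (if 1 \<le> i then q ^ (a + b) * fpoly [a, b, 0] (i - 1) q else 0)"
  using fpoly_max_in_row2_3[of 1 a b i q] by (simp add: fpoly_max_in_row2_ab0)

lemma fpoly_a00: "fpoly [a, 0, 0] i q = (if i = 0 then 1 else 0)"
proof (induction a)
  case 0
  have "cells [0, 0, 0] = {}" by (auto simp: cells_def nth_Cons split: nat.splits)
  hence "SYT [0, 0, 0] = {\<lambda>_. 0}" unfolding SYT_def by (auto simp: fun_eq_iff bij_betw_def)
  moreover have "des [0, 0, 0] (\<lambda>_. 0) = 0" "maj [0, 0, 0] (\<lambda>_. 0) = 0"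
    by (simp_all add: des_def maj_def descents_def)
  moreover have "{T \<in> {\<lambda>_. 0}. des [0, 0, 0] T = i} = (if i = 0 then {\<lambda>_. 0} else {})"
    using calculation(2) by auto
  ultimately show ?case unfolding fpoly_def by simp
next
  case (Suc a)
  have "fpoly_max_in_row [Suc a, 0, 0] 1 i q = 0"
    by (rule fpoly_max_in_row_not_corner) (simp_all add: is_corner_def)
  thus ?case using fpoly_3_rows[of "Suc a" 0 0 i q] fpoly_max_in_row0_3[of "Suc a" 0 0 i q]
      fpoly_max_in_row2_ab0[of "Suc a" 0 i q] Suc by simp
qed

lemma fpoly_ab0_recurrence:
  assumes "1 \<le> b" "b \<le> a"
  shows "fpoly [a, b, 0] i q = (if b < a then fpoly [a - 1, b, 0] i q else 0)
    + fpoly [a, b - 1, 0] i q - fpoly [a - 1, b - 1, 0] i q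
    + (if 1 \<le> i then q ^ (a + b - 1) * fpoly [a - 1, b - 1, 0] (i - 1) q else 0)"
  using fpoly_3_rows[of a b 0 i q] fpoly_max_in_row0_3[of a b 0 i q] fpoly_max_in_row1_3[of b a 0 i q]
    fpoly_max_in_row2_ab0[of a b i q] assms by simp

lemma fpoly_ab1_recurrence:
  assumes "1 \<le> b" "b \<le> a"
  shows "fpoly [a, b, 1] i q = (if b < a then fpoly [a - 1, b, 1] i q else 0)
    + (if 1 < b then fpoly [a, b - 1, 1] i q - fpoly [a - 1, b - 1, 1] i q
         + (if 1 \<le> i then q ^ (a + b) * fpoly [a - 1, b - 1, 1] (i - 1) q else 0) else 0)
    + (if 1 \<le> i then q ^ (a + b) * fpoly [a, b, 0] (i - 1) q else 0)"
  using fpoly_3_rows[of a b 1 i q] fpoly_max_in_row0_3[of a b 1 i q] fpoly_max_in_row1_3[of b a 1 i q]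
    fpoly_max_in_row2_ab1[of a b i q] assms by simp

lemma fpoly_ab2_recurrence:
  assumes "2 \<le> b" "b \<le> a"
  shows "fpoly [a, b, 2] i q = (if b < a then fpoly [a - 1, b, 2] i q else 0)
    + (if 2 < b then fpoly [a, b - 1, 2] i q - fpoly [a - 1, b - 1, 2] i q
         + (if 1 \<le> i then q ^ (a + b + 1) * fpoly [a - 1, b - 1, 2] (i - 1) q else 0) else 0)
    + (if 1 \<le> i then q ^ (a + b) * fpoly [a, b, 0] (i - 1) q
         + q ^ (a + b + 1) * (fpoly [a, b, 1] (i - 1) q
            - (if 2 \<le> i then q ^ (a + b) * fpoly [a, b, 0] (i - 2) q else 0)) else 0)"
proof -
  have "fpoly_max_in_row [a, b, 2] 2 i q =
      (if 1 \<le> i then q ^ (a + b) * fpoly [a, b, 0] (i - 1) q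
         + q ^ (a + b + 1) * (fpoly [a, b, 1] (i - 1) q
            - (if 2 \<le> i then q ^ (a + b) * fpoly [a, b, 0] (i - 2) q else 0)) else 0)"
    using fpoly_max_in_row2_3[of 2 a b i q] fpoly_max_in_row2_ab1[of a b _ q] assms
    by (cases "2 \<le> i") (auto simp: numeral_2_eq_2)
  thus ?thesis
    using fpoly_3_rows[of a b 2 i q] fpoly_max_in_row0_3[of a b 2 i q] fpoly_max_in_row1_3[of b a 2 i q] assms
    by simp
qed

section \<open>\<open>q\<close>-binomial coefficients\<close>

definition not_root_of_unity :: "'a::comm_ring_1 \<Rightarrow> bool" where
  "not_root_of_unity q \<longleftrightarrow> (\<forall>m::nat. m \<ge> 1 \<longrightarrow> q ^ m \<noteq> 1)"

lemma one_minus_power_nonzero: "not_root_of_unity q \<Longrightarrow> 0 < m \<Longrightarrow> 1 - q ^ m \<noteq> 0"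
  unfolding not_root_of_unity_def by simp

lemma one_minus_power_Suc_nonzero: "not_root_of_unity q \<Longrightarrow> 1 - q ^ Suc m \<noteq> 0"
  by (rule one_minus_power_nonzero) simp_all

lemma qpoch_0 [simp]: "qpoch q 0 = 1"
  by (simp add: qpoch_def)

lemma qpoch_Suc: "qpoch q (Suc m) = qpoch q m * (1 - q ^ Suc m)"
  by (simp add: qpoch_def mult.commute)

lemma qpoch_nonzero: "not_root_of_unity (q::'a::field) \<Longrightarrow> qpoch q m \<noteq> 0"
proof (induction m)
  case (Suc m)
  thus ?case using one_minus_power_Suc_nonzero[OF Suc.prems, of m] by (simp add: qpoch_Suc del: power_Suc)
qed simp

definition qbin :: "'a::field \<Rightarrow> nat \<Rightarrow> nat \<Rightarrow> 'a" where
  "qbin q m j = (if j \<le> m then qpoch q m / (qpoch q j * qpoch q (m - j)) else 0)"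

lemma qbinom_of_nat: "qbinom (int m) (int j) q = qbin q m j"
  unfolding qbin_def qbinom_def by (simp add: nat_diff_distrib' of_nat_diff)

lemma qbin_0_right: "not_root_of_unity q \<Longrightarrow> qbin q m 0 = 1"
  unfolding qbin_def using qpoch_nonzero[of q m] by simp

lemma qbin_eq_0: "m < j \<Longrightarrow> qbin q m j = 0"
  unfolding qbin_def by simp

lemma qbin_Suc_right:
  assumes q: "not_root_of_unity q"
  shows "qbin q m (Suc j) = qbin q m j * (1 - q ^ (m - j)) / (1 - q ^ Suc j)"
proof (cases "Suc j \<le> m")
  case True
  then obtain d where m: "m = Suc j + d" using le_Suc_ex by blast
  have cancel: "x / (a * u * b) = x / (a * (b * v)) * v / u"
    if "a \<noteq> 0" "b \<noteq> 0" "u \<noteq> 0" "v \<noteq> 0" for x a b u v :: 'a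
    using that by (simp add: field_simps)
  have "qbin q m (Suc j) = qpoch q m / (qpoch q j * (1 - q ^ Suc j) * qpoch q d)"
    "qbin q m j = qpoch q m / (qpoch q j * (qpoch q d * (1 - q ^ Suc d)))" "m - j = Suc d"
    unfolding qbin_def m by (simp_all add: qpoch_Suc del: power_Suc)
  thus ?thesis
    using qpoch_nonzero[OF q] one_minus_power_Suc_nonzero[OF q] by (simp only:) (rule cancel)
qed (auto simp: qbin_def le_Suc_eq)

lemma qbin_Suc_Suc:
  assumes q: "not_root_of_unity q"
  shows "qbin q (Suc m) (Suc j) = qbin q m j * (1 - q ^ Suc m) / (1 - q ^ Suc j)"
proof (cases "j \<le> m")
  case True
  have cancel: "x * v / (a * u * b) = x / (a * b) * v / u"
    if "a \<noteq> 0" "b \<noteq> 0" "u \<noteq> 0" for x a b u v :: 'a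
    using that by (simp add: field_simps)
  have "qbin q (Suc m) (Suc j) = qpoch q m * (1 - q ^ Suc m) / (qpoch q j * (1 - q ^ Suc j) * qpoch q (m - j))"
    "qbin q m j = qpoch q m / (qpoch q j * qpoch q (m - j))"
    unfolding qbin_def using True by (simp_all add: qpoch_Suc del: power_Suc)
  thus ?thesis
    using qpoch_nonzero[OF q] one_minus_power_Suc_nonzero[OF q] by (simp only:) (rule cancel)
qed (simp add: qbin_def)

lemma qbin_1_right: "not_root_of_unity q \<Longrightarrow> qbin q (Suc m) 1 = (1 - q ^ Suc m) / (1 - q)"
  using qbin_Suc_Suc[of q m 0] qbin_0_right[of q m] by simp

section \<open>Closed forms for the shapes \<open>(a, b, c)\<close>, \<open>c \<le> 2\<close>\<close>

text \<open>For \<open>b = 0\<close> the general term is wrong because \<open>b - 1\<close> truncates, hence the separate case.\<close>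

definition closed_form_ab0 :: "'a::field \<Rightarrow> nat \<Rightarrow> nat \<Rightarrow> nat \<Rightarrow> 'a" where
  "closed_form_ab0 q a b i = (if b = 0 then (if i = 0 then 1 else 0) else if i = 0 then 0 else
     q ^ (i * (i - 1) + b) * (1 - q ^ (Suc a - b)) / (1 - q ^ Suc a) * qbin q (Suc a) i * qbin q (b - 1) (i - 1))"

lemma closed_form_ab0_1:
  assumes q: "not_root_of_unity q" and "1 \<le> b"
  shows "closed_form_ab0 q a b 1 = q^b * (1 - q^(Suc a - b)) / (1 - q)"
  using assms one_minus_power_Suc_nonzero[OF q, of a] qbin_1_right[OF q, of a]
  by (simp add: closed_form_ab0_def qbin_0_right del: power_Suc)

text \<open>The identities below are the recurrences in their generic range after evaluating every term
  (see the \<open>_step\<close> lemmas): \<open>S\<close>, \<open>Y\<close>, \<open>Z\<close>, \<open>P\<close> stand for \<open>q\<^sup>s\<close>, \<open>q\<^sup>y\<close>, \<open>q\<^sup>z\<close>, \<open>q\<^bsup>s*s\<^esup>\<close>, and \<open>A\<close>, \<open>B\<close>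
  for two \<open>q\<close>-binomials from which all others arise by \<open>qbin_Suc_right\<close> and \<open>qbin_Suc_Suc\<close>.\<close>

lemma closed_form_ab0_identity:
  fixes q S Y Z A B P :: "'a::field"
  assumes "1 - q*S \<noteq> 0" "1 - q^2*S \<noteq> 0" "1 - q^2*S*Y*Z \<noteq> 0" "1 - q^3*S*Y*Z \<noteq> 0"
  shows "P*S^4*q^4*Y*(1-q*Z)/(1-q^3*S*Y*Z)*(A*(1-q^3*S*Y*Z)/(1-q^2*S))*(B*(1-q*S*Y)/(1-q*S))
    = P*S^4*q^4*Y*(1-Z)/(1-q^2*S*Y*Z)*(A*(1-q*Y*Z)/(1-q^2*S))*(B*(1-q*S*Y)/(1-q*S))
    + P*S^4*q^3*Y*(1-q^2*Z)/(1-q^3*S*Y*Z)*(A*(1-q^3*S*Y*Z)/(1-q^2*S))*(B*(1-Y)/(1-q*S))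
    - P*S^4*q^3*Y*(1-q*Z)/(1-q^2*S*Y*Z)*(A*(1-q*Y*Z)/(1-q^2*S))*(B*(1-Y)/(1-q*S))
    + S^2*q^3*Y^2*Z * (P*S^2*q*Y*(1-q*Z)/(1-q^2*S*Y*Z)*A*B)"
proof -
  define D1 D2 D3 D4 where "D1 = 1 - q^2*S" and "D2 = 1 - q*S"
    and "D3 = 1 - q^3*S*Y*Z" and "D4 = 1 - q^2*S*Y*Z"
  have nD: "D1 \<noteq> 0" "D2 \<noteq> 0" "D3 \<noteq> 0" "D4 \<noteq> 0" using assms unfolding D1_def D2_def D3_def D4_def by auto
  define f Dl where "f = A*B*P*Y*q^3*S^2" and "Dl = D1*D2*D4"
  have t1: "P*S^4*q^4*Y*(1-q*Z)/D3*(A*D3/D1)*(B*(1-q*S*Y)/D2) = f * (S^2*q*(1-q*Z)*(1-q*S*Y)*D4) / Dl"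
    unfolding f_def Dl_def using nD by (simp add: field_simps, algebra?)
  have t2: "P*S^4*q^4*Y*(1-Z)/D4*(A*(1-q*Y*Z)/D1)*(B*(1-q*S*Y)/D2) = f * (S^2*q*(1-Z)*(1-q*Y*Z)*(1-q*S*Y)) / Dl"
    unfolding f_def Dl_def using nD by (simp add: field_simps, algebra?)
  have t3: "P*S^4*q^3*Y*(1-q^2*Z)/D3*(A*D3/D1)*(B*(1-Y)/D2) = f * (S^2*(1-q^2*Z)*(1-Y)*D4) / Dl"
    unfolding f_def Dl_def using nD by (simp add: field_simps, algebra?)
  have t4: "P*S^4*q^3*Y*(1-q*Z)/D4*(A*(1-q*Y*Z)/D1)*(B*(1-Y)/D2) = f * (S^2*(1-q*Z)*(1-q*Y*Z)*(1-Y)) / Dl"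
    unfolding f_def Dl_def using nD by (simp add: field_simps, algebra?)
  have t5: "S^2*q^3*Y^2*Z * (P*S^2*q*Y*(1-q*Z)/D4*A*B) = f * (S^2*Y^2*Z*q*(1-q*Z)*D1*D2) / Dl"
    unfolding f_def Dl_def using nD by (simp add: field_simps, algebra?)
  have N: "S^2*q*(1-q*Z)*(1-q*S*Y)*D4 = S^2*q*(1-Z)*(1-q*Y*Z)*(1-q*S*Y) + S^2*(1-q^2*Z)*(1-Y)*D4
     - S^2*(1-q*Z)*(1-q*Y*Z)*(1-Y) + S^2*Y^2*Z*q*(1-q*Z)*D1*D2"
    unfolding D1_def D2_def D4_def by algebra
  have "P*S^4*q^4*Y*(1-q*Z)/D3*(A*D3/D1)*(B*(1-q*S*Y)/D2)
    = P*S^4*q^4*Y*(1-Z)/D4*(A*(1-q*Y*Z)/D1)*(B*(1-q*S*Y)/D2)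
    + P*S^4*q^3*Y*(1-q^2*Z)/D3*(A*D3/D1)*(B*(1-Y)/D2)
    - P*S^4*q^3*Y*(1-q*Z)/D4*(A*(1-q*Y*Z)/D1)*(B*(1-Y)/D2)
    + S^2*q^3*Y^2*Z * (P*S^2*q*Y*(1-q*Z)/D4*A*B)"
    unfolding t1 t2 t3 t4 t5 N by (simp add: add_divide_distrib diff_divide_distrib algebra_simps)
  thus ?thesis unfolding D1_def D2_def D3_def D4_def .
qed

lemma closed_form_ab0_step:
  assumes q: "not_root_of_unity q"
  shows "closed_form_ab0 q (s+2+y+z) (s+2+y) (s+2) = closed_form_ab0 q (s+1+y+z) (s+2+y) (s+2)
    + closed_form_ab0 q (s+2+y+z) (s+1+y) (s+2) - closed_form_ab0 q (s+1+y+z) (s+1+y) (s+2)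
    + q^(2*s+3+2*y+z) * closed_form_ab0 q (s+1+y+z) (s+1+y) (s+1)"
proof -
  define A B P S Y Z where "A = qbin q (s+2+y+z) (s+1)" and "B = qbin q (s+y) s"
    and "P = q^(s*s)" and "S = q^s" and "Y = q^y" and "Z = q^z"
  have p: "q^(Suc (s+2+y+z)) = q^3*S*Y*Z" "q^(Suc (s+1)) = q^2*S" "q^(s+2+y+z - (s+1)) = q*Y*Z"
    "q^(Suc (s+y)) = q*S*Y" "q^(Suc s) = q*S" "q^(s+y-s) = Y" "q^(s+2) = q^2*S"
    "q^(Suc (s+1+y+z)) = q^2*S*Y*Z" "q^(s+1) = q*S"
    "q^((s+2)*(s+1)+(s+2+y)) = P*S^4*q^4*Y" "q^(Suc z) = q*Z"
    "q^((s+2)*(s+1)+(s+1+y)) = P*S^4*q^3*Y" "q^(Suc (Suc z)) = q^2*Z" "q^z = Z"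
    "q^((s+1)*s+(s+1+y)) = P*S^2*q*Y" "q^(2*s+3+2*y+z) = S^2*q^3*Y^2*Z"
    unfolding P_def S_def Y_def Z_def
    by (simp_all only: power_add[symmetric] power_mult[symmetric] power_Suc[symmetric] power_Suc2[symmetric])
      (rule arg_cong[where f = "power q"], simp add: algebra_simps)+
  have e: "Suc (s+1) = s+2" by simp
  have A1: "qbin q (Suc (s+2+y+z)) (s+2) = A * (1 - q^3*S*Y*Z) / (1 - q^2*S)"
    using qbin_Suc_Suc[OF q, of "s+2+y+z" "s+1"] unfolding A_def p e .
  have A2: "qbin q (s+2+y+z) (s+2) = A * (1 - q*Y*Z) / (1 - q^2*S)"
    using qbin_Suc_right[OF q, of "s+2+y+z" "s+1"] unfolding A_def p e .
  have B1: "qbin q (s+1+y) (s+1) = B * (1 - q*S*Y) / (1 - q*S)"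
    using qbin_Suc_Suc[OF q, of "s+y" "s"] unfolding B_def p by simp
  have B2: "qbin q (s+y) (s+1) = B * (1 - Y) / (1 - q*S)"
    using qbin_Suc_right[OF q, of "s+y" "s"] unfolding B_def p by simp
  have "closed_form_ab0 q (s+2+y+z) (s+2+y) (s+2) = q^((s+2)*(s+1)+(s+2+y)) * (1 - q^(Suc z))
      / (1 - q^(Suc (s+2+y+z))) * qbin q (Suc (s+2+y+z)) (s+2) * qbin q (s+1+y) (s+1)"
    "closed_form_ab0 q (s+1+y+z) (s+2+y) (s+2) = q^((s+2)*(s+1)+(s+2+y)) * (1 - q^z)
      / (1 - q^(Suc (s+1+y+z))) * qbin q (s+2+y+z) (s+2) * qbin q (s+1+y) (s+1)"
    "closed_form_ab0 q (s+2+y+z) (s+1+y) (s+2) = q^((s+2)*(s+1)+(s+1+y)) * (1 - q^(Suc (Suc z)))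
      / (1 - q^(Suc (s+2+y+z))) * qbin q (Suc (s+2+y+z)) (s+2) * qbin q (s+y) (s+1)"
    "closed_form_ab0 q (s+1+y+z) (s+1+y) (s+2) = q^((s+2)*(s+1)+(s+1+y)) * (1 - q^(Suc z))
      / (1 - q^(Suc (s+1+y+z))) * qbin q (s+2+y+z) (s+2) * qbin q (s+y) (s+1)"
    "closed_form_ab0 q (s+1+y+z) (s+1+y) (s+1) = q^((s+1)*s+(s+1+y)) * (1 - q^(Suc z))
      / (1 - q^(Suc (s+1+y+z))) * qbin q (s+2+y+z) (s+1) * qbin q (s+y) s"
    by (simp_all add: closed_form_ab0_def)
  note terms = this[unfolded A1 A2 B1 B2 p A_def[symmetric] B_def[symmetric]]
  have "1 - q*S \<noteq> 0" "1 - q^2*S \<noteq> 0" "1 - q^2*S*Y*Z \<noteq> 0" "1 - q^3*S*Y*Z \<noteq> 0"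
    using one_minus_power_Suc_nonzero[OF q, of s] one_minus_power_Suc_nonzero[OF q, of "s+1"]
      one_minus_power_Suc_nonzero[OF q, of "s+1+y+z"] one_minus_power_Suc_nonzero[OF q, of "s+2+y+z"]
    unfolding p(1,2,5,8) by auto
  thus ?thesis unfolding terms p(16) by (rule closed_form_ab0_identity)
qed

lemma closed_form_ab0_recurrence_1:
  assumes q: "not_root_of_unity q" and b: "1 \<le> b" "b \<le> a"
  shows "closed_form_ab0 q a b 1 = closed_form_ab0 q (a-1) b 1 + closed_form_ab0 q a (b-1) 1
    - closed_form_ab0 q (a-1) (b-1) 1 + q^(a+b-1) * closed_form_ab0 q (a-1) (b-1) 0"
proof -
  obtain t z where tz: "b = Suc t" "a = b + z" using b by (metis le_Suc_ex not0_implies_Suc not_one_le_zero)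
  have "1 - q \<noteq> 0" using one_minus_power_Suc_nonzero[OF q, of 0] by simp
  hence over_1_minus_q: "x / (1 - q) = y / (1 - q) + u / (1 - q) - v / (1 - q) + w"
    if "x = y + u - v + w * (1 - q)" for x y u v w :: 'a
    using that by (simp add: add_divide_distrib diff_divide_distrib del: eq_iff_diff_eq_0)
  have ab: "closed_form_ab0 q a b 1 = q^b * (1 - q^(Suc z)) / (1 - q)"
    "closed_form_ab0 q (a-1) b 1 = q^b * (1 - q^z) / (1 - q)"
    using closed_form_ab0_1[OF q, of b a] closed_form_ab0_1[OF q, of b "a-1"] tz by simp_all
  show ?thesis
  proof (cases "t = 0")
    case True
    have "q * (1 - q^(Suc z)) / (1 - q) = q * (1 - q^z) / (1 - q) + 0 / (1 - q) - 0 / (1 - q) + q^Suc z"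
      by (rule over_1_minus_q) (simp add: algebra_simps)
    thus ?thesis using ab tz True by (simp add: closed_form_ab0_def)
  next
    case False
    have "closed_form_ab0 q a (b-1) 1 = q^t * (1 - q^(Suc (Suc z))) / (1 - q)"
      "closed_form_ab0 q (a-1) (b-1) 1 = q^t * (1 - q^(Suc z)) / (1 - q)"
      using closed_form_ab0_1[OF q, of t a] closed_form_ab0_1[OF q, of t "a-1"] tz False by simp_all
    moreover have "q^Suc t * (1 - q^(Suc z)) / (1 - q) = q^Suc t * (1 - q^z) / (1 - q)
        + q^t * (1 - q^(Suc (Suc z))) / (1 - q) - q^t * (1 - q^(Suc z)) / (1 - q) + 0"
      by (rule over_1_minus_q) (simp add: algebra_simps)
    ultimately show ?thesis using ab tz False by (simp add: closed_form_ab0_def)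
  qed
qed

lemma closed_form_ab0_recurrence:
  assumes q: "not_root_of_unity q" and b: "1 \<le> b" "b \<le> a"
  shows "closed_form_ab0 q a b i = closed_form_ab0 q (a-1) b i + closed_form_ab0 q a (b-1) i
    - closed_form_ab0 q (a-1) (b-1) i + (if 1 \<le> i then q^(a+b-1) * closed_form_ab0 q (a-1) (b-1) (i-1) else 0)"
proof -
  consider "i = 0" | "i = 1" | "2 \<le> i" "b < i" | "2 \<le> i" "i \<le> b" using b by linarith
  then show ?thesis
  proof cases
    case 1 thus ?thesis using b by (simp add: closed_form_ab0_def)
  next
    case 2 thus ?thesis using closed_form_ab0_recurrence_1[OF q b] by simp
  next
    case 3 thus ?thesis using b by (simp add: closed_form_ab0_def qbin_eq_0)
  next
    case 4
    obtain s where s: "i = s + 2" using 4 by (metis add.commute le_Suc_ex add_2_eq_Suc')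
    obtain y where y: "b = s + 2 + y" using 4 s le_Suc_ex by (metis le_add_diff_inverse)
    obtain z where z: "a = s + 2 + y + z" using b y le_Suc_ex by (metis le_add_diff_inverse)
    have shifts: "a + b - 1 = 2*s+3+2*y+z" "a - 1 = s+1+y+z" "b - 1 = s+1+y" "i - 1 = s + 1"
      using s y z by auto
    show ?thesis unfolding shifts using closed_form_ab0_step[OF q, of s y z] s y z by simp
  qed
qed

definition closed_form_ab1 :: "'a::field \<Rightarrow> nat \<Rightarrow> nat \<Rightarrow> nat \<Rightarrow> 'a" where
  "closed_form_ab1 q a b i = (if i = 0 then 0 else
     q ^ ((i - 1) * (i - 1) + b + 1) * (1 - q ^ (i - 1)) * (1 - q ^ (Suc a - b)) / ((1 - q ^ i) * (1 - q))
       * qbin q (Suc a) (i - 1) * qbin q b (i - 1))"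

lemma closed_form_ab1_identity:
  fixes q S Y Z A B P :: "'a::field"
  assumes "1 - q \<noteq> 0" "1 - q*S \<noteq> 0" "1 - q^2*S \<noteq> 0" "1 - q^2*S*Y*Z \<noteq> 0"
  shows "P*S^3*q^3*Y*(1-q*S)*(1-q*Z)/((1-q^2*S)*(1-q))*(A*(1-q^2*S*Y*Z)/(1-q*S))*(B*(1-q*S*Y)/(1-q*S))
    = P*S^3*q^3*Y*(1-q*S)*(1-Z)/((1-q^2*S)*(1-q))*(A*(1-q*Y*Z)/(1-q*S))*(B*(1-q*S*Y)/(1-q*S))
    + P*S^3*q^2*Y*(1-q*S)*(1-q^2*Z)/((1-q^2*S)*(1-q))*(A*(1-q^2*S*Y*Z)/(1-q*S))*(B*(1-Y)/(1-q*S))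
    - P*S^3*q^2*Y*(1-q*S)*(1-q*Z)/((1-q^2*S)*(1-q))*(A*(1-q*Y*Z)/(1-q*S))*(B*(1-Y)/(1-q*S))
    + (S^2*q^2*Y^2*Z * (P*S*q*Y*(1-S)*(1-q*Z)/((1-q*S)*(1-q))*A*B)
      + S^2*q^2*Y^2*Z * (P*S^2*q*Y*(1-q*Z)/(1-q^2*S*Y*Z)*(A*(1-q^2*S*Y*Z)/(1-q*S))*B))"
proof -
  define Dq D1 D2 D3 where "Dq = 1 - q" and "D1 = 1 - q*S" and "D2 = 1 - q^2*S" and "D3 = 1 - q^2*S*Y*Z"
  have nD: "Dq \<noteq> 0" "D1 \<noteq> 0" "D2 \<noteq> 0" "D3 \<noteq> 0" using assms unfolding Dq_def D1_def D2_def D3_def by auto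
  define f Dl where "f = A*B*P*Y*S^3*q^2" and "Dl = D1*D2*Dq"
  have t0: "P*S^3*q^3*Y*D1*(1-q*Z)/(D2*Dq)*(A*D3/D1)*(B*(1-q*S*Y)/D1) = f * (q*(1-q*Z)*D3*(1-q*S*Y)) / Dl"
    unfolding f_def Dl_def using nD by (simp add: field_simps, algebra?)
  have t1: "P*S^3*q^3*Y*D1*(1-Z)/(D2*Dq)*(A*(1-q*Y*Z)/D1)*(B*(1-q*S*Y)/D1) = f * (q*(1-Z)*(1-q*Y*Z)*(1-q*S*Y)) / Dl"
    unfolding f_def Dl_def using nD by (simp add: field_simps, algebra?)
  have t2: "P*S^3*q^2*Y*D1*(1-q^2*Z)/(D2*Dq)*(A*D3/D1)*(B*(1-Y)/D1) = f * ((1-q^2*Z)*D3*(1-Y)) / Dl"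
    unfolding f_def Dl_def using nD by (simp add: field_simps, algebra?)
  have t3: "P*S^3*q^2*Y*D1*(1-q*Z)/(D2*Dq)*(A*(1-q*Y*Z)/D1)*(B*(1-Y)/D1) = f * ((1-q*Z)*(1-q*Y*Z)*(1-Y)) / Dl"
    unfolding f_def Dl_def using nD by (simp add: field_simps, algebra?)
  have t4: "S^2*q^2*Y^2*Z * (P*S*q*Y*(1-S)*(1-q*Z)/(D1*Dq)*A*B) = f * (q*Y^2*Z*(1-S)*(1-q*Z)*D2) / Dl"
    unfolding f_def Dl_def using nD by (simp add: field_simps, algebra?)
  have t5: "S^2*q^2*Y^2*Z * (P*S^2*q*Y*(1-q*Z)/D3*(A*D3/D1)*B) = f * (S*q*Y^2*Z*(1-q*Z)*D2*Dq) / Dl"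
    unfolding f_def Dl_def using nD by (simp add: field_simps, algebra?)
  have N: "q*(1-q*Z)*D3*(1-q*S*Y) = q*(1-Z)*(1-q*Y*Z)*(1-q*S*Y) + (1-q^2*Z)*D3*(1-Y)
     - (1-q*Z)*(1-q*Y*Z)*(1-Y) + (q*Y^2*Z*(1-S)*(1-q*Z)*D2 + S*q*Y^2*Z*(1-q*Z)*D2*Dq)"
    unfolding D2_def D3_def Dq_def by algebra
  have "P*S^3*q^3*Y*D1*(1-q*Z)/(D2*Dq)*(A*D3/D1)*(B*(1-q*S*Y)/D1)
    = P*S^3*q^3*Y*D1*(1-Z)/(D2*Dq)*(A*(1-q*Y*Z)/D1)*(B*(1-q*S*Y)/D1)
    + P*S^3*q^2*Y*D1*(1-q^2*Z)/(D2*Dq)*(A*D3/D1)*(B*(1-Y)/D1)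
    - P*S^3*q^2*Y*D1*(1-q*Z)/(D2*Dq)*(A*(1-q*Y*Z)/D1)*(B*(1-Y)/D1)
    + (S^2*q^2*Y^2*Z * (P*S*q*Y*(1-S)*(1-q*Z)/(D1*Dq)*A*B)
      + S^2*q^2*Y^2*Z * (P*S^2*q*Y*(1-q*Z)/D3*(A*D3/D1)*B))"
    unfolding t0 t1 t2 t3 t4 t5 N by (simp add: add_divide_distrib diff_divide_distrib algebra_simps)
  thus ?thesis unfolding Dq_def D1_def D2_def D3_def .
qed

lemma closed_form_ab1_step:
  assumes q: "not_root_of_unity q"
  shows "closed_form_ab1 q (s+1+y+z) (s+1+y) (s+2) = closed_form_ab1 q (s+y+z) (s+1+y) (s+2)
    + closed_form_ab1 q (s+1+y+z) (s+y) (s+2) - closed_form_ab1 q (s+y+z) (s+y) (s+2)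
    + (q^(2*s+2+2*y+z) * closed_form_ab1 q (s+y+z) (s+y) (s+1)
      + q^(2*s+2+2*y+z) * closed_form_ab0 q (s+1+y+z) (s+1+y) (s+1))"
proof -
  define A B P S Y Z where "A = qbin q (s+1+y+z) s" and "B = qbin q (s+y) s"
    and "P = q^(s*s)" and "S = q^s" and "Y = q^y" and "Z = q^z"
  have p: "q^(Suc (s+1+y+z)) = q^2*S*Y*Z" "q^(Suc s) = q*S" "q^(s+1+y+z - s) = q*Y*Z"
    "q^(Suc (s+y)) = q*S*Y" "q^(s+y-s) = Y" "q^(s+2) = q^2*S" "q^(s+1) = q*S"
    "q^((s+1)*(s+1)+(s+1+y)+1) = P*S^3*q^3*Y" "q^(Suc z) = q*Z"
    "q^((s+1)*(s+1)+(s+y)+1) = P*S^3*q^2*Y" "q^(Suc (Suc z)) = q^2*Z" "q^z = Z" "q^s = S"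
    "q^(s*s+(s+y)+1) = P*S*q*Y" "q^((s+1)*s+(s+1+y)) = P*S^2*q*Y" "q^(2*s+2+2*y+z) = S^2*q^2*Y^2*Z"
    "q^(s+1+y) = q*S*Y" "q^(Suc (s+1)) = q^2*S"
    unfolding P_def S_def Y_def Z_def
    by (simp_all only: power_add[symmetric] power_mult[symmetric] power_Suc[symmetric] power_Suc2[symmetric])
      (rule arg_cong[where f = "power q"], simp add: algebra_simps)+
  have e: "Suc s = s+1" "Suc (s+y) = s+1+y" by simp_all
  have A1: "qbin q (Suc (s+1+y+z)) (s+1) = A * (1 - q^2*S*Y*Z) / (1 - q*S)"
    using qbin_Suc_Suc[OF q, of "s+1+y+z" s] unfolding A_def p e .
  have A2: "qbin q (s+1+y+z) (s+1) = A * (1 - q*Y*Z) / (1 - q*S)"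
    using qbin_Suc_right[OF q, of "s+1+y+z" s] unfolding A_def p e .
  have B1: "qbin q (s+1+y) (s+1) = B * (1 - q*S*Y) / (1 - q*S)"
    using qbin_Suc_Suc[OF q, of "s+y" s] unfolding B_def p e .
  have B2: "qbin q (s+y) (s+1) = B * (1 - Y) / (1 - q*S)"
    using qbin_Suc_right[OF q, of "s+y" s] unfolding B_def p e .
  have "closed_form_ab1 q (s+1+y+z) (s+1+y) (s+2) = q^((s+1)*(s+1)+(s+1+y)+1) * (1 - q^(s+1)) * (1 - q^(Suc z))
      / ((1 - q^(s+2)) * (1 - q)) * qbin q (Suc (s+1+y+z)) (s+1) * qbin q (s+1+y) (s+1)"
    "closed_form_ab1 q (s+y+z) (s+1+y) (s+2) = q^((s+1)*(s+1)+(s+1+y)+1) * (1 - q^(s+1)) * (1 - q^z)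
      / ((1 - q^(s+2)) * (1 - q)) * qbin q (s+1+y+z) (s+1) * qbin q (s+1+y) (s+1)"
    "closed_form_ab1 q (s+1+y+z) (s+y) (s+2) = q^((s+1)*(s+1)+(s+y)+1) * (1 - q^(s+1)) * (1 - q^(Suc (Suc z)))
      / ((1 - q^(s+2)) * (1 - q)) * qbin q (Suc (s+1+y+z)) (s+1) * qbin q (s+y) (s+1)"
    "closed_form_ab1 q (s+y+z) (s+y) (s+2) = q^((s+1)*(s+1)+(s+y)+1) * (1 - q^(s+1)) * (1 - q^(Suc z))
      / ((1 - q^(s+2)) * (1 - q)) * qbin q (s+1+y+z) (s+1) * qbin q (s+y) (s+1)"
    "closed_form_ab1 q (s+y+z) (s+y) (s+1) = q^(s*s+(s+y)+1) * (1 - q^s) * (1 - q^(Suc z))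
      / ((1 - q^(s+1)) * (1 - q)) * qbin q (s+1+y+z) s * qbin q (s+y) s"
    "closed_form_ab0 q (s+1+y+z) (s+1+y) (s+1) = q^((s+1)*s+(s+1+y)) * (1 - q^(Suc z))
      / (1 - q^(Suc (s+1+y+z))) * qbin q (Suc (s+1+y+z)) (s+1) * qbin q (s+y) s"
    by (simp_all add: closed_form_ab1_def closed_form_ab0_def)
  note terms = this[unfolded A1 A2 B1 B2 p A_def[symmetric] B_def[symmetric]]
  have "1 - q^Suc 0 \<noteq> 0" "1 - q^Suc s \<noteq> 0" "1 - q^Suc (s+1) \<noteq> 0" "1 - q^Suc (s+1+y+z) \<noteq> 0"
    by (rule one_minus_power_Suc_nonzero[OF q])+
  hence "1 - q \<noteq> 0" "1 - q*S \<noteq> 0" "1 - q^2*S \<noteq> 0" "1 - q^2*S*Y*Z \<noteq> 0"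
    by (simp_all only: p(1,2,18) power_Suc0_right not_False_eq_True)
  thus ?thesis unfolding terms p(16) by (rule closed_form_ab1_identity)
qed

lemma closed_form_ab1_recurrence:
  assumes q: "not_root_of_unity q" and b: "1 \<le> b" "b \<le> a"
  shows "closed_form_ab1 q a b i = closed_form_ab1 q (a-1) b i + closed_form_ab1 q a (b-1) i
    - closed_form_ab1 q (a-1) (b-1) i
    + (if 1 \<le> i then q^(a+b) * closed_form_ab1 q (a-1) (b-1) (i-1) + q^(a+b) * closed_form_ab0 q a b (i-1) else 0)"
proof -
  consider "i = 0" | "i = 1" | "2 \<le> i" "b + 1 < i" | "2 \<le> i" "i \<le> b + 1" using b by linarith
  then show ?thesis
  proof cases
    case 1 thus ?thesis using b by (simp add: closed_form_ab1_def)
  next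
    case 2 thus ?thesis using b by (simp add: closed_form_ab1_def closed_form_ab0_def)
  next
    case 3 thus ?thesis using b by (simp add: closed_form_ab1_def closed_form_ab0_def qbin_eq_0)
  next
    case 4
    define s y z where "s = i - 2" and "y = b - 1 - s" and "z = a - b"
    have syz: "i = s + 2" "b = s + 1 + y" "a = s + 1 + y + z" using 4 b unfolding s_def y_def z_def by auto
    have shifts: "a + b = 2*s+2+2*y+z" "a - 1 = s+y+z" "b - 1 = s+y" "i - 1 = s + 1" using syz by auto
    show ?thesis unfolding shifts using closed_form_ab1_step[OF q, of s y z] syz by simp
  qed
qed

definition closed_form_ab2 :: "'a::field \<Rightarrow> nat \<Rightarrow> nat \<Rightarrow> nat \<Rightarrow> 'a" where
  "closed_form_ab2 q a b i = (if i < 2 then 0 else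
     q ^ ((i - 2) * (i - 1) + b + 4) * ((1 - q ^ (Suc a - b)) * (1 - q ^ (b - 1)) * (1 - q ^ a))
       / ((1 - q ^ (i - 1)) * (1 - q) * (1 - q ^ 2)) * qbin q (Suc a) (i - 2) * qbin q b (i - 2))"

text \<open>Here \<open>W\<close> stands for \<open>q\<^bsup>s+y-1\<^esup>\<close>, tied to the other variables only by \<open>q W = S Y\<close>
  (because of the truncated subtraction).\<close>

lemma closed_form_ab2_identity:
  fixes q S Y Z W A B P :: "'a::field"
  assumes "1 - q \<noteq> 0" "1 - q^2 \<noteq> 0" "1 - q*S \<noteq> 0" "1 - q^2*S \<noteq> 0" "1 - q^2*S*Y*Z \<noteq> 0"
    and W: "q*W = S*Y"
  shows "P*S^4*q^7*Y*((1-q*Z)*(1-S*Y)*(1-q*S*Y*Z))/((1-q^2*S)*(1-q)*(1-q^2))*(A*(1-q^2*S*Y*Z)/(1-q*S))*(B*(1-q*S*Y)/(1-q*S))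
    = P*S^4*q^7*Y*((1-Z)*(1-S*Y)*(1-S*Y*Z))/((1-q^2*S)*(1-q)*(1-q^2))*(A*(1-q*Y*Z)/(1-q*S))*(B*(1-q*S*Y)/(1-q*S))
    + P*S^4*q^6*Y*((1-q^2*Z)*(1-W)*(1-q*S*Y*Z))/((1-q^2*S)*(1-q)*(1-q^2))*(A*(1-q^2*S*Y*Z)/(1-q*S))*(B*(1-Y)/(1-q*S))
    - P*S^4*q^6*Y*((1-q*Z)*(1-W)*(1-S*Y*Z))/((1-q^2*S)*(1-q)*(1-q^2))*(A*(1-q*Y*Z)/(1-q*S))*(B*(1-Y)/(1-q*S))
    + (S^2*q^3*Y^2*Z*(P*S^2*q^4*Y*((1-q*Z)*(1-W)*(1-S*Y*Z))/((1-q*S)*(1-q)*(1-q^2))*A*B)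
      + S^2*q^2*Y^2*Z*(P*S^4*q^3*Y*(1-q*Z)/(1-q^2*S*Y*Z)*(A*(1-q^2*S*Y*Z)/(1-q*S)*(1-q*Y*Z)/(1-q^2*S))*(B*(1-Y)/(1-q*S)))
      + S^2*q^3*Y^2*Z*(P*S^3*q^3*Y*(1-q*S)*(1-q*Z)/((1-q^2*S)*(1-q))*(A*(1-q^2*S*Y*Z)/(1-q*S))*(B*(1-q*S*Y)/(1-q*S))
        - S^2*q^2*Y^2*Z*(P*S^2*q*Y*(1-q*Z)/(1-q^2*S*Y*Z)*(A*(1-q^2*S*Y*Z)/(1-q*S))*B)))"
proof -
  define Dq Dq2 D1 D2 D3 where "Dq = 1 - q" and "Dq2 = 1 - q^2" and "D1 = 1 - q*S" and "D2 = 1 - q^2*S"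
    and "D3 = 1 - q^2*S*Y*Z"
  have nD: "Dq \<noteq> 0" "Dq2 \<noteq> 0" "D1 \<noteq> 0" "D2 \<noteq> 0" "D3 \<noteq> 0"
    using assms unfolding Dq_def Dq2_def D1_def D2_def D3_def by auto
  define f Dl where "f = A*B*P*Y*S^4*q^5" and "Dl = D1*D1*D2*Dq*Dq2"
  have t0: "P*S^4*q^7*Y*((1-q*Z)*(1-S*Y)*(1-q*S*Y*Z))/(D2*Dq*Dq2)*(A*D3/D1)*(B*(1-q*S*Y)/D1) = f * (q^2*(1-q*Z)*(1-S*Y)*(1-q*S*Y*Z)*D3*(1-q*S*Y)) / Dl"
    unfolding f_def Dl_def using nD by (simp add: field_simps, algebra?)
  have t1: "P*S^4*q^7*Y*((1-Z)*(1-S*Y)*(1-S*Y*Z))/(D2*Dq*Dq2)*(A*(1-q*Y*Z)/D1)*(B*(1-q*S*Y)/D1) = f * (q^2*(1-Z)*(1-S*Y)*(1-S*Y*Z)*(1-q*Y*Z)*(1-q*S*Y)) / Dl"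
    unfolding f_def Dl_def using nD by (simp add: field_simps, algebra?)
  have t2: "P*S^4*q^6*Y*((1-q^2*Z)*(1-W)*(1-q*S*Y*Z))/(D2*Dq*Dq2)*(A*D3/D1)*(B*(1-Y)/D1) = f * ((q*(1-W))*(1-q^2*Z)*(1-q*S*Y*Z)*D3*(1-Y)) / Dl"
    unfolding f_def Dl_def using nD by (simp add: field_simps, algebra?)
  have t3: "P*S^4*q^6*Y*((1-q*Z)*(1-W)*(1-S*Y*Z))/(D2*Dq*Dq2)*(A*(1-q*Y*Z)/D1)*(B*(1-Y)/D1) = f * ((q*(1-W))*(1-q*Z)*(1-S*Y*Z)*(1-q*Y*Z)*(1-Y)) / Dl"
    unfolding f_def Dl_def using nD by (simp add: field_simps, algebra?)
  have t4: "S^2*q^3*Y^2*Z*(P*S^2*q^4*Y*((1-q*Z)*(1-W)*(1-S*Y*Z))/(D1*Dq*Dq2)*A*B) = f * (q*(q*(1-W))*Y^2*Z*(1-q*Z)*(1-S*Y*Z)*D1*D2) / Dl"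
    unfolding f_def Dl_def using nD by (simp add: field_simps, algebra?)
  have t5: "S^2*q^2*Y^2*Z*(P*S^4*q^3*Y*(1-q*Z)/D3*(A*D3/D1*(1-q*Y*Z)/D2)*(B*(1-Y)/D1)) = f * (S^2*Y^2*Z*(1-q*Z)*(1-q*Y*Z)*(1-Y)*Dq*Dq2) / Dl"
    unfolding f_def Dl_def using nD by (simp add: field_simps, algebra?)
  have t6: "S^2*q^3*Y^2*Z*(P*S^3*q^3*Y*D1*(1-q*Z)/(D2*Dq)*(A*D3/D1)*(B*(1-q*S*Y)/D1)) = f * (S*q*Y^2*Z*(1-q*Z)*D3*(1-q*S*Y)*D1*Dq2) / Dl"
    unfolding f_def Dl_def using nD by (simp add: field_simps, algebra?)
  have t7: "S^2*q^3*Y^2*Z*(S^2*q^2*Y^2*Z*(P*S^2*q*Y*(1-q*Z)/D3*(A*D3/D1)*B)) = f * (S^2*q*Y^4*Z^2*(1-q*Z)*D1*D2*Dq*Dq2) / Dl"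
    unfolding f_def Dl_def using nD by (simp add: field_simps, algebra?)
  have t67: "S^2*q^3*Y^2*Z*(P*S^3*q^3*Y*D1*(1-q*Z)/(D2*Dq)*(A*D3/D1)*(B*(1-q*S*Y)/D1)
        - S^2*q^2*Y^2*Z*(P*S^2*q*Y*(1-q*Z)/D3*(A*D3/D1)*B))
      = f * (S*q*Y^2*Z*(1-q*Z)*D3*(1-q*S*Y)*D1*Dq2) / Dl - f * (S^2*q*Y^4*Z^2*(1-q*Z)*D1*D2*Dq*Dq2) / Dl"
    by (subst right_diff_distrib) (simp only: t6 t7)
  have qW: "q*(1-W) = q - S*Y" using W by (simp add: algebra_simps)
  have N: "q^2*(1-q*Z)*(1-S*Y)*(1-q*S*Y*Z)*D3*(1-q*S*Y) = q^2*(1-Z)*(1-S*Y)*(1-S*Y*Z)*(1-q*Y*Z)*(1-q*S*Y)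
      + (q*(1-W))*(1-q^2*Z)*(1-q*S*Y*Z)*D3*(1-Y) - (q*(1-W))*(1-q*Z)*(1-S*Y*Z)*(1-q*Y*Z)*(1-Y)
      + (q*(q*(1-W))*Y^2*Z*(1-q*Z)*(1-S*Y*Z)*D1*D2 + S^2*Y^2*Z*(1-q*Z)*(1-q*Y*Z)*(1-Y)*Dq*Dq2
        + (S*q*Y^2*Z*(1-q*Z)*D3*(1-q*S*Y)*D1*Dq2 - S^2*q*Y^4*Z^2*(1-q*Z)*D1*D2*Dq*Dq2))"
    unfolding qW D1_def D2_def D3_def Dq_def Dq2_def by algebra
  have "P*S^4*q^7*Y*((1-q*Z)*(1-S*Y)*(1-q*S*Y*Z))/(D2*Dq*Dq2)*(A*D3/D1)*(B*(1-q*S*Y)/D1)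
    = P*S^4*q^7*Y*((1-Z)*(1-S*Y)*(1-S*Y*Z))/(D2*Dq*Dq2)*(A*(1-q*Y*Z)/D1)*(B*(1-q*S*Y)/D1)
    + P*S^4*q^6*Y*((1-q^2*Z)*(1-W)*(1-q*S*Y*Z))/(D2*Dq*Dq2)*(A*D3/D1)*(B*(1-Y)/D1)
    - P*S^4*q^6*Y*((1-q*Z)*(1-W)*(1-S*Y*Z))/(D2*Dq*Dq2)*(A*(1-q*Y*Z)/D1)*(B*(1-Y)/D1)
    + (S^2*q^3*Y^2*Z*(P*S^2*q^4*Y*((1-q*Z)*(1-W)*(1-S*Y*Z))/(D1*Dq*Dq2)*A*B)
      + S^2*q^2*Y^2*Z*(P*S^4*q^3*Y*(1-q*Z)/D3*(A*D3/D1*(1-q*Y*Z)/D2)*(B*(1-Y)/D1))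
      + S^2*q^3*Y^2*Z*(P*S^3*q^3*Y*D1*(1-q*Z)/(D2*Dq)*(A*D3/D1)*(B*(1-q*S*Y)/D1)
        - S^2*q^2*Y^2*Z*(P*S^2*q*Y*(1-q*Z)/D3*(A*D3/D1)*B)))"
    unfolding t0 t1 t2 t3 t4 t5 t67 N by (simp add: add_divide_distrib diff_divide_distrib algebra_simps)
  thus ?thesis unfolding Dq_def Dq2_def D1_def D2_def D3_def .
qed

lemma closed_form_ab2_step:
  assumes q: "not_root_of_unity q" and sy: "1 \<le> s + y"
  shows "closed_form_ab2 q (s+1+y+z) (s+1+y) (s+3) = closed_form_ab2 q (s+y+z) (s+1+y) (s+3)
    + closed_form_ab2 q (s+1+y+z) (s+y) (s+3) - closed_form_ab2 q (s+y+z) (s+y) (s+3)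
    + (q^(2*s+3+2*y+z) * closed_form_ab2 q (s+y+z) (s+y) (s+2)
      + q^(2*s+2+2*y+z) * closed_form_ab0 q (s+1+y+z) (s+1+y) (s+2)
      + q^(2*s+3+2*y+z) * (closed_form_ab1 q (s+1+y+z) (s+1+y) (s+2)
        - q^(2*s+2+2*y+z) * closed_form_ab0 q (s+1+y+z) (s+1+y) (s+1)))"
proof -
  define A B P S Y Z W where "A = qbin q (s+1+y+z) s" and "B = qbin q (s+y) s"
    and "P = q^(s*s)" and "S = q^s" and "Y = q^y" and "Z = q^z" and "W = q^(s+y-1)"
  have p: "q^(Suc (s+1+y+z)) = q^2*S*Y*Z" "q^(Suc s) = q*S" "q^(s+1+y+z - s) = q*Y*Z"
    "q^(Suc (s+y)) = q*S*Y" "q^(s+y-s) = Y" "q^(s+2) = q^2*S" "q^(s+1) = q*S"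
    "q^(Suc z) = q*Z" "q^(Suc (Suc z)) = q^2*Z" "q^z = Z"
    "q^(s+y) = S*Y" "q^(s+1+y+z) = q*S*Y*Z" "q^(s+y+z) = S*Y*Z" "q^(s+1+y) = q*S*Y"
    "q^(Suc (s+1+y+z) - (s+1)) = q*Y*Z" "q^(Suc (s+1)) = q^2*S"
    "q^((s+1)*(s+2)+(s+1+y)+4) = P*S^4*q^7*Y" "q^((s+1)*(s+2)+(s+y)+4) = P*S^4*q^6*Y"
    "q^(s*(s+1)+(s+y)+4) = P*S^2*q^4*Y" "q^((s+2)*(s+1)+(s+1+y)) = P*S^4*q^3*Y"
    "q^((s+1)*(s+1)+(s+1+y)+1) = P*S^3*q^3*Y" "q^((s+1)*s+(s+1+y)) = P*S^2*q*Y"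
    "q^(2*s+3+2*y+z) = S^2*q^3*Y^2*Z" "q^(2*s+2+2*y+z) = S^2*q^2*Y^2*Z"
    unfolding P_def S_def Y_def Z_def
    by (simp_all only: power_add[symmetric] power_mult[symmetric] power_Suc[symmetric] power_Suc2[symmetric])
      (rule arg_cong[where f = "power q"], simp add: algebra_simps)+
  have pW: "q^(s+y-1) = W" unfolding W_def ..
  have "s + y = Suc (s + y - 1)" using sy by simp
  hence W: "q*W = S*Y" unfolding W_def S_def Y_def by (metis power_Suc power_add)
  have e: "Suc s = s+1" "Suc (s+y) = s+1+y" "Suc (s+1) = s+2" by simp_all
  have A1: "qbin q (Suc (s+1+y+z)) (s+1) = A * (1 - q^2*S*Y*Z) / (1 - q*S)"
    using qbin_Suc_Suc[OF q, of "s+1+y+z" s] unfolding A_def p e .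
  have A2: "qbin q (s+1+y+z) (s+1) = A * (1 - q*Y*Z) / (1 - q*S)"
    using qbin_Suc_right[OF q, of "s+1+y+z" s] unfolding A_def p e .
  have A3: "qbin q (Suc (s+1+y+z)) (s+2) = A * (1 - q^2*S*Y*Z) / (1 - q*S) * (1 - q*Y*Z) / (1 - q^2*S)"
    using qbin_Suc_right[OF q, of "Suc (s+1+y+z)" "s+1"] unfolding A1 p e .
  have B1: "qbin q (s+1+y) (s+1) = B * (1 - q*S*Y) / (1 - q*S)"
    using qbin_Suc_Suc[OF q, of "s+y" s] unfolding B_def p e .
  have B2: "qbin q (s+y) (s+1) = B * (1 - Y) / (1 - q*S)"
    using qbin_Suc_right[OF q, of "s+y" s] unfolding B_def p e .
  have "closed_form_ab2 q (s+1+y+z) (s+1+y) (s+3) = q^((s+1)*(s+2)+(s+1+y)+4)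
      * ((1 - q^(Suc z)) * (1 - q^(s+y)) * (1 - q^(s+1+y+z))) / ((1 - q^(s+2)) * (1 - q) * (1 - q^2))
      * qbin q (Suc (s+1+y+z)) (s+1) * qbin q (s+1+y) (s+1)"
    "closed_form_ab2 q (s+y+z) (s+1+y) (s+3) = q^((s+1)*(s+2)+(s+1+y)+4)
      * ((1 - q^z) * (1 - q^(s+y)) * (1 - q^(s+y+z))) / ((1 - q^(s+2)) * (1 - q) * (1 - q^2))
      * qbin q (s+1+y+z) (s+1) * qbin q (s+1+y) (s+1)"
    "closed_form_ab2 q (s+1+y+z) (s+y) (s+3) = q^((s+1)*(s+2)+(s+y)+4)
      * ((1 - q^(Suc (Suc z))) * (1 - q^(s+y-1)) * (1 - q^(s+1+y+z))) / ((1 - q^(s+2)) * (1 - q) * (1 - q^2))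
      * qbin q (Suc (s+1+y+z)) (s+1) * qbin q (s+y) (s+1)"
    "closed_form_ab2 q (s+y+z) (s+y) (s+3) = q^((s+1)*(s+2)+(s+y)+4)
      * ((1 - q^(Suc z)) * (1 - q^(s+y-1)) * (1 - q^(s+y+z))) / ((1 - q^(s+2)) * (1 - q) * (1 - q^2))
      * qbin q (s+1+y+z) (s+1) * qbin q (s+y) (s+1)"
    "closed_form_ab2 q (s+y+z) (s+y) (s+2) = q^(s*(s+1)+(s+y)+4)
      * ((1 - q^(Suc z)) * (1 - q^(s+y-1)) * (1 - q^(s+y+z))) / ((1 - q^(s+1)) * (1 - q) * (1 - q^2))
      * qbin q (s+1+y+z) s * qbin q (s+y) s"
    "closed_form_ab0 q (s+1+y+z) (s+1+y) (s+2) = q^((s+2)*(s+1)+(s+1+y)) * (1 - q^(Suc z))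
      / (1 - q^(Suc (s+1+y+z))) * qbin q (Suc (s+1+y+z)) (s+2) * qbin q (s+y) (s+1)"
    "closed_form_ab1 q (s+1+y+z) (s+1+y) (s+2) = q^((s+1)*(s+1)+(s+1+y)+1) * (1 - q^(s+1))
      * (1 - q^(Suc z)) / ((1 - q^(s+2)) * (1 - q)) * qbin q (Suc (s+1+y+z)) (s+1) * qbin q (s+1+y) (s+1)"
    "closed_form_ab0 q (s+1+y+z) (s+1+y) (s+1) = q^((s+1)*s+(s+1+y)) * (1 - q^(Suc z))
      / (1 - q^(Suc (s+1+y+z))) * qbin q (Suc (s+1+y+z)) (s+1) * qbin q (s+y) s"
    by (simp_all add: closed_form_ab2_def closed_form_ab1_def closed_form_ab0_def)
  note terms = this[unfolded A1 A2 A3 B1 B2 p pW A_def[symmetric] B_def[symmetric]]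
  have "1 - q \<noteq> 0" "1 - q^2 \<noteq> 0"
    using one_minus_power_nonzero[OF q, of 1] one_minus_power_nonzero[OF q, of 2] by simp_all
  moreover have "1 - q^Suc s \<noteq> 0" "1 - q^Suc (s+1) \<noteq> 0" "1 - q^Suc (s+1+y+z) \<noteq> 0"
    by (rule one_minus_power_Suc_nonzero[OF q])+
  hence "1 - q*S \<noteq> 0" "1 - q^2*S \<noteq> 0" "1 - q^2*S*Y*Z \<noteq> 0"
    by (simp_all only: p(1,2,16) not_False_eq_True)
  ultimately
  show ?thesis unfolding terms p(23,24) using W by (rule closed_form_ab2_identity)
qed

text \<open>The case \<open>i = 2\<close>, which is not of the form \<open>s + 3\<close> covered by \<open>closed_form_ab2_step\<close>.\<close>

lemma closed_form_ab2_step_2: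
  assumes q: "not_root_of_unity q"
  shows "closed_form_ab2 q (t+2+z) (t+2) 2 = closed_form_ab2 q (t+1+z) (t+2) 2
    + closed_form_ab2 q (t+2+z) (t+1) 2 - closed_form_ab2 q (t+1+z) (t+1) 2
    + q^(2*t+4+z) * closed_form_ab0 q (t+2+z) (t+2) 1"
proof -
  define T Z where "T = q^t" and "Z = q^z"
  have p: "q^(t+6) = q^6*T" "q^(t+5) = q^5*T" "q^(Suc z) = q*Z" "q^(Suc (Suc z)) = q^2*Z" "q^z = Z"
    "q^(Suc t) = q*T" "q^t = T" "q^(t+2+z) = q^2*T*Z" "q^(t+1+z) = q*T*Z" "q^(2*t+4+z) = T^2*q^4*Z"
    "q^(t+2) = q^2*T"
    unfolding T_def Z_def
    by (simp_all only: power_add[symmetric] power_mult[symmetric] power_Suc[symmetric] power_Suc2[symmetric])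
      (rule arg_cong[where f = "power q"], simp add: algebra_simps)+
  have "1 - q \<noteq> 0" "1 - q^2 \<noteq> 0"
    using one_minus_power_Suc_nonzero[OF q, of 0] one_minus_power_Suc_nonzero[OF q, of 1]
    by (auto simp: power2_eq_square)
  hence common_denominator: "x / ((1-q)*(1-q)*(1-q^2)) = y / ((1-q)*(1-q)*(1-q^2))
      + u / ((1-q)*(1-q)*(1-q^2)) - v / ((1-q)*(1-q)*(1-q^2)) + w / (1 - q)"
    if "x = y + u - v + w * ((1-q)*(1-q^2))" for x y u v w :: 'a
    using that by (simp add: add_divide_distrib diff_divide_distrib)
  have "closed_form_ab2 q (t+2+z) (t+2) 2
      = q^(t+6)*((1-q^(Suc z))*(1-q^(Suc t))*(1-q^(t+2+z)))/((1-q)*(1-q)*(1-q^2))"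
    "closed_form_ab2 q (t+1+z) (t+2) 2 = q^(t+6)*((1-q^z)*(1-q^(Suc t))*(1-q^(t+1+z)))/((1-q)*(1-q)*(1-q^2))"
    "closed_form_ab2 q (t+2+z) (t+1) 2 = q^(t+5)*((1-q^(Suc (Suc z)))*(1-q^t)*(1-q^(t+2+z)))/((1-q)*(1-q)*(1-q^2))"
    "closed_form_ab2 q (t+1+z) (t+1) 2 = q^(t+5)*((1-q^(Suc z))*(1-q^t)*(1-q^(t+1+z)))/((1-q)*(1-q)*(1-q^2))"
    by (simp_all add: closed_form_ab2_def qbin_0_right[OF q] add.commute)
  moreover have "closed_form_ab0 q (t+2+z) (t+2) 1 = q^(t+2)*(1-q^(Suc z))/(1-q)"
    using closed_form_ab0_1[OF q, of "t+2" "t+2+z"] by (simp add: Suc_diff_le)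
  moreover have "q^6*T*((1-q*Z)*(1-q*T)*(1-q^2*T*Z)) = q^6*T*((1-Z)*(1-q*T)*(1-q*T*Z))
      + q^5*T*((1-q^2*Z)*(1-T)*(1-q^2*T*Z)) - q^5*T*((1-q*Z)*(1-T)*(1-q*T*Z))
      + T^2*q^4*Z*(q^2*T*(1-q*Z))*((1-q)*(1-q^2))"
    by algebra
  ultimately show ?thesis unfolding p by (simp only: common_denominator times_divide_eq_right)
qed

lemma closed_form_ab2_recurrence:
  assumes q: "not_root_of_unity q" and b: "2 \<le> b" "b \<le> a"
  shows "closed_form_ab2 q a b i = closed_form_ab2 q (a-1) b i + closed_form_ab2 q a (b-1) i
    - closed_form_ab2 q (a-1) (b-1) i
    + (if 1 \<le> i then q^(a+b+1) * closed_form_ab2 q (a-1) (b-1) (i-1) + q^(a+b) * closed_form_ab0 q a b (i-1)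
         + q^(a+b+1) * (closed_form_ab1 q a b (i-1) - (if 2 \<le> i then q^(a+b) * closed_form_ab0 q a b (i-2) else 0))
       else 0)"
proof -
  consider "i \<le> 1" | "i = 2" | "3 \<le> i" "b + 2 < i" | "3 \<le> i" "i \<le> b + 2" by linarith
  then show ?thesis
  proof cases
    case 1 thus ?thesis using b by (auto simp: closed_form_ab2_def closed_form_ab1_def closed_form_ab0_def)
  next
    case 2
    define t z where "t = b - 2" and "z = a - b"
    have tz: "b = t + 2" "a = t + 2 + z" using b unfolding t_def z_def by auto
    have shifts: "a + b = 2*t+4+z" "a - 1 = t+1+z" "b - 1 = t + 1" using tz by auto
    show ?thesis unfolding shifts using closed_form_ab2_step_2[OF q, of t z] tz 2
      by (simp add: closed_form_ab2_def closed_form_ab1_def closed_form_ab0_def ac_simps)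
  next
    case 3 thus ?thesis using b
      by (simp add: closed_form_ab2_def closed_form_ab1_def closed_form_ab0_def qbin_eq_0)
  next
    case 4
    define s y z where "s = i - 3" and "y = b - 1 - s" and "z = a - b"
    have syz: "i = s + 3" "b = s + 1 + y" "a = s + 1 + y + z" "1 \<le> s + y"
      using 4 b unfolding s_def y_def z_def by auto
    have shifts: "a + b + 1 = 2*s+3+2*y+z" "a + b = 2*s+2+2*y+z" "a - 1 = s+y+z" "b - 1 = s+y"
      "i - 1 = s + 2" "i - 2 = s + 1"
      using syz by auto
    have conds: "(1 \<le> i) = True" "(2 \<le> i) = True" using syz by auto
    show ?thesis unfolding shifts(1) unfolding shifts(2-6) conds if_True unfolding syz(1-3)
      by (rule closed_form_ab2_step[OF q syz(4)])
  qed
qed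

lemma fpoly_ab0_eq_closed_form:
  assumes q: "not_root_of_unity q"
  shows "b \<le> a \<Longrightarrow> fpoly [a, b, 0] i q = closed_form_ab0 q a b i"
proof (induction "a + b" arbitrary: a b i rule: less_induct)
  case less
  show ?case
  proof (cases "b = 0")
    case True thus ?thesis by (simp add: fpoly_a00 closed_form_ab0_def)
  next
    case False
    hence b: "1 \<le> b" by simp
    have "\<not> b < a \<Longrightarrow> closed_form_ab0 q (a-1) b i = 0" using less.prems b by (simp add: closed_form_ab0_def)
    thus ?thesis unfolding fpoly_ab0_recurrence[OF b less.prems] closed_form_ab0_recurrence[OF q b less.prems]
      using less b by auto
  qed
qed

lemma fpoly_ab1_eq_closed_form:
  assumes q: "not_root_of_unity q"
  shows "1 \<le> b \<Longrightarrow> b \<le> a \<Longrightarrow> fpoly [a, b, 1] i q = closed_form_ab1 q a b i"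
proof (induction "a + b" arbitrary: a b i rule: less_induct)
  case less
  have "\<not> b < a \<Longrightarrow> closed_form_ab1 q (a-1) b i = 0" using less.prems by (simp add: closed_form_ab1_def)
  moreover have "\<not> 1 < b \<Longrightarrow> closed_form_ab1 q a (b-1) j = 0 \<and> closed_form_ab1 q (a-1) (b-1) j = 0" for j
    using less.prems by (cases "j \<le> 1") (auto simp: closed_form_ab1_def qbin_eq_0)
  moreover have "fpoly [a, b, 0] (i-1) q = closed_form_ab0 q a b (i-1)"
    using fpoly_ab0_eq_closed_form[OF q] less.prems by simp
  ultimately show ?case
    unfolding fpoly_ab1_recurrence[OF less.prems] closed_form_ab1_recurrence[OF q less.prems]
    using less by auto
qed

lemma fpoly_ab2_eq_closed_form:
  assumes q: "not_root_of_unity q"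
  shows "2 \<le> b \<Longrightarrow> b \<le> a \<Longrightarrow> fpoly [a, b, 2] i q = closed_form_ab2 q a b i"
proof (induction "a + b" arbitrary: a b i rule: less_induct)
  case less
  have "\<not> b < a \<Longrightarrow> closed_form_ab2 q (a-1) b i = 0" using less.prems by (simp add: closed_form_ab2_def)
  moreover have "\<not> 2 < b \<Longrightarrow> closed_form_ab2 q a (b-1) j = 0 \<and> closed_form_ab2 q (a-1) (b-1) j = 0" for j
    using less.prems by (simp add: closed_form_ab2_def)
  moreover have "fpoly [a, b, 0] j q = closed_form_ab0 q a b j" "fpoly [a, b, 1] j q = closed_form_ab1 q a b j" for j
    using fpoly_ab0_eq_closed_form[OF q] fpoly_ab1_eq_closed_form[OF q] less.prems by simp_all
  ultimately show ?case
    unfolding fpoly_ab2_recurrence[OF less.prems] closed_form_ab2_recurrence[OF q less.prems]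
    using less by auto
qed

theorem mainTheorem5:
  fixes n k i :: nat and q :: complex
  assumes "2 \<le> k" and "k \<le> n" and "2 \<le> i"
    and "\<forall>m::nat. m \<ge> 1 \<longrightarrow> q ^ m \<noteq> 1"
  shows "fpoly [n, k, 2] i q =
    q ^ (k + i^2 + 6 - 3 * i)
      * ((1 - q ^ (n - k + 1)) * (1 - q ^ (k - 1)) * (1 - q ^ n))
        / ((1 - q ^ (i - 1)) * (1 - q) * (1 - q ^ 2))
      * qbinom (int n + 1) (int i - 2) q * qbinom (int k) (int i - 2) q"
proof -
  have q: "not_root_of_unity q" using assms(4) unfolding not_root_of_unity_def .
  obtain j where j: "i = j + 2" using assms(3) le_Suc_ex by (metis add.commute)
  have exponent: "(i - 2) * (i - 1) + k + 4 = k + i^2 + 6 - 3 * i"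
    using j by (simp add: power2_eq_square algebra_simps)
  have nat_args: "int n + 1 = int (Suc n)" "int i - 2 = int (i - 2)" using assms(3) by auto
  show ?thesis
    unfolding fpoly_ab2_eq_closed_form[OF q assms(1,2)] closed_form_ab2_def nat_args qbinom_of_nat
    using assms(2,3) exponent by (simp add: Suc_diff_le)
qed

end
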